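(* Let $X$ be a reflexive complex Banach space and let $a$ be a densely defined positive operator from $X$ to $X^\ast$ with $(ax,x)\ge\gamma\|x\|^2$ for all $x\in\operatorname{dom}a$, for some $\gamma>0$. Let $A_F$ be the Friedrichs extension of $a$. Then $A_F$ is the largest positive self-adjoint extension of $a$ with respect to the partial order $\ge$ defined below: that is, $A_F\ge A$ for every positive self-adjoint operator $A$ from $X$ to $X^\ast$ extending $a$.
   Context: $X^\ast$ denotes the conjugate dual of $X$ (continuous conjugate-linear functionals on $X$); $X$ is identified with $X^{\ast\ast}$. For $v\in X^\ast$, $x\in X$ write $(v,x):=v(x)$ and $(x,v):=\overline{v(x)}$. An operator $A$ from $X$ to $X^\ast$ is positive if $(Ax,x)\ge0$ for all $x\in\operatorname{dom}A$; its adjoint $A^\ast$ has domain $\{y\in X:x\mapsto(Ax,y)\text{ continuous on }\operatorname{dom}A\}$ and is determined by $(x,A^\ast y)=(Ax,y)$; $A$ is self-adjoint if $A=A^\ast$. Friedrichs extension: let $H$ be the completion of $\operatorname{dom}a$ with respect to the inner product $[x,y]:=(ax,y)$; the inclusion $\operatorname{dom}a\to X$ extends to a continuous injection $H\to X$, so $H$ is regarded as a dense subspace of $X$. $A_F$ is the operator with $\operatorname{dom}A_F=\{x\in H: y\mapsto[x,y]\text{ is continuous on }H\text{ in the norm of }X\}$ and $A_Fx$ the element $z\in X^\ast$ with $(z,y)=[x,y]$ for all $y\in H$; it is a positive self-adjoint extension of $a$. Partial order: for a positive self-adjoint $A$ from $X$ to $X^\ast$, let $H_A$ be the completion of $\operatorname{ran}A$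 with the inner product $[Ax,Ay]_A:=(Ax,y)$, let $J_A$ be the operator from $H_A$ to $X^\ast$ with $\operatorname{dom}J_A=\operatorname{ran}A$, $J_A(Ax)=Ax$, and let $J_A^\ast$ be its adjoint, i.e. the operator from $X$ to $H_A$ with $\operatorname{dom}J_A^\ast=\{y\in X:h\mapsto(J_Ah,y)\text{ continuous on }\operatorname{dom}J_A\}$ and $[h,J_A^\ast y]_A=(J_Ah,y)$. For positive self-adjoint $A,B$ one writes $A\ge B$ iff $\operatorname{dom}J_A^\ast\subseteq\operatorname{dom}J_B^\ast$ and $[J_A^\ast y,J_A^\ast y]_A\ge[J_B^\ast y,J_B^\ast y]_B$ for all $y\in\operatorname{dom}J_A^\ast$. *)

theory Defs
  imports "HOL-Analysis.Analysis"
begin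

text \<open>The complex Banach space X is modelled as a real Banach space type 'a together with
  a complex scalar multiplication sm extending the real one and compatible with the norm.\<close>

definition cplx_space :: "(complex \<Rightarrow> 'a::real_normed_vector \<Rightarrow> 'a) \<Rightarrow> bool" where
  "cplx_space sm \<longleftrightarrow>
     (\<forall>r x. sm (complex_of_real r) x = r *\<^sub>R x) \<and>
     (\<forall>c x y. sm c (x + y) = sm c x + sm c y) \<and>
     (\<forall>c d x. sm (c + d) x = sm c x + sm d x) \<and>
     (\<forall>c d x. sm c (sm d x) = sm (c * d) x) \<and>
     (\<forall>c x. norm (sm c x) = cmod c * norm x)"

definition cdual :: "(complex \<Rightarrow> 'a::real_normed_vector \<Rightarrow> 'a) \<Rightarrow> ('a \<Rightarrow> complex) set" where
  "cdual sm = {v. (\<forall>x y. v (x + y) = v x + v y) \<and> (\<forall>c x. v (sm c x) = cnj c * v x)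
                  \<and> continuous_on UNIV v}"

definition dual_norm :: "('a::real_normed_vector \<Rightarrow> complex) \<Rightarrow> real" where
  "dual_norm v = (SUP x\<in>{x. norm x \<le> 1}. cmod (v x))"

text \<open>Reflexivity: every continuous conjugate-linear functional on X* (complex structure
  (c v)(x) = c * v x, dual norm) is of the form v \<mapsto> (x,v) = cnj (v x).\<close>
definition reflexive_space :: "(complex \<Rightarrow> 'a::real_normed_vector \<Rightarrow> 'a) \<Rightarrow> bool" where
  "reflexive_space sm \<longleftrightarrow>
     (\<forall>\<Phi> :: ('a \<Rightarrow> complex) \<Rightarrow> complex.
        ((\<forall>v\<in>cdual sm. \<forall>w\<in>cdual sm. \<Phi> (\<lambda>z. v z + w z) = \<Phi> v + \<Phi> w) \<and>
         (\<forall>c. \<forall>v\<in>cdual sm. \<Phi> (\<lambda>z. c * v z) = cnj c * \<Phi> v) \<and>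
         (\<exists>K. \<forall>v\<in>cdual sm. cmod (\<Phi> v) \<le> K * dual_norm v))
        \<longrightarrow> (\<exists>x. \<forall>v\<in>cdual sm. \<Phi> v = cnj (v x)))"

text \<open>An operator from X to X*: a domain together with a map (values outside the domain
  are irrelevant). (v,x) := v x.\<close>
type_synonym 'a op = "'a set \<times> ('a \<Rightarrow> 'a \<Rightarrow> complex)"

definition odom :: "'a op \<Rightarrow> 'a set" where "odom A = fst A"
definition oapp :: "'a op \<Rightarrow> 'a \<Rightarrow> 'a \<Rightarrow> complex" where "oapp A = snd A"

definition is_op :: "(complex \<Rightarrow> 'a \<Rightarrow> 'a) \<Rightarrow> 'a::real_normed_vector op \<Rightarrow> bool" where
  "is_op sm A \<longleftrightarrow>
     0 \<in> odom A \<and> (\<forall>x\<in>odom A. \<forall>y\<in>odom A. x + y \<in> odom A) \<and>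
     (\<forall>c. \<forall>x\<in>odom A. sm c x \<in> odom A) \<and>
     (\<forall>x\<in>odom A. oapp A x \<in> cdual sm) \<and>
     (\<forall>x\<in>odom A. \<forall>y\<in>odom A. oapp A (x + y) = (\<lambda>z. oapp A x z + oapp A y z)) \<and>
     (\<forall>c. \<forall>x\<in>odom A. oapp A (sm c x) = (\<lambda>z. c * oapp A x z))"

definition op_eq :: "'a op \<Rightarrow> 'a op \<Rightarrow> bool" where
  "op_eq A B \<longleftrightarrow> odom A = odom B \<and> (\<forall>x\<in>odom A. oapp A x = oapp B x)"

definition extends :: "'a op \<Rightarrow> 'a op \<Rightarrow> bool" where
  "extends A a \<longleftrightarrow> odom a \<subseteq> odom A \<and> (\<forall>x\<in>odom a. oapp A x = oapp a x)"

definition positive_op :: "'a op \<Rightarrow> bool" where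
  "positive_op A \<longleftrightarrow> (\<forall>x\<in>odom A. Im (oapp A x x) = 0 \<and> 0 \<le> Re (oapp A x x))"

definition adj :: "(complex \<Rightarrow> 'a \<Rightarrow> 'a) \<Rightarrow> 'a::real_normed_vector op \<Rightarrow> 'a op" where
  "adj sm A = ({y. continuous_on (odom A) (\<lambda>x. oapp A x y)},
               \<lambda>y. THE z. z \<in> cdual sm \<and> (\<forall>x\<in>odom A. cnj (z x) = oapp A x y))"

definition self_adjoint :: "(complex \<Rightarrow> 'a \<Rightarrow> 'a) \<Rightarrow> 'a::real_normed_vector op \<Rightarrow> bool" where
  "self_adjoint sm A \<longleftrightarrow> op_eq A (adj sm A)"

text \<open>The completion H of dom a w.r.t. [x,y] = (ax,y) is identified
  (via the continuous injection H \<rightarrow> X) with the set of X-limits of sequences in dom a that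
  are Cauchy for the [.,.]-norm; [x,y] on H is the limit of [s n, t n].\<close>
definition fr_approx :: "'a::real_normed_vector op \<Rightarrow> 'a \<Rightarrow> (nat \<Rightarrow> 'a) \<Rightarrow> bool" where
  "fr_approx a x s \<longleftrightarrow> (\<forall>n. s n \<in> odom a) \<and>
     (\<forall>e>0. \<exists>N. \<forall>m\<ge>N. \<forall>n\<ge>N. sqrt (Re (oapp a (s m - s n) (s m - s n))) < e) \<and>
     s \<longlonglongrightarrow> x"

definition fr_H :: "'a::real_normed_vector op \<Rightarrow> 'a set" where
  "fr_H a = {x. \<exists>s. fr_approx a x s}"

definition fr_form :: "'a::real_normed_vector op \<Rightarrow> 'a \<Rightarrow> 'a \<Rightarrow> complex" where
  "fr_form a x y = lim (\<lambda>n. oapp a ((SOME s. fr_approx a x s) n) ((SOME t. fr_approx a y t) n))"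

definition friedrichs :: "(complex \<Rightarrow> 'a \<Rightarrow> 'a) \<Rightarrow> 'a::real_normed_vector op \<Rightarrow> 'a op" where
  "friedrichs sm a = ({x \<in> fr_H a. continuous_on (fr_H a) (\<lambda>y. fr_form a x y)},
                      \<lambda>x. THE z. z \<in> cdual sm \<and> (\<forall>y\<in>fr_H a. z y = fr_form a x y))"

text \<open>H_A = completion of ran A with [Ax,Ay]_A = (Ax,y); its elements are
  represented by sequences x_n in dom A with (A x_n) Cauchy in H_A.
  dom J_A* = {y. Ax \<mapsto> (Ax,y) continuous on ran A w.r.t. the H_A-norm};
  J_A* y is the element h of H_A with [Ax, h]_A = (Ax, y) for all x in dom A.\<close>
definition hA_cauchy :: "'a::real_normed_vector op \<Rightarrow> (nat \<Rightarrow> 'a) \<Rightarrow> bool" where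
  "hA_cauchy A s \<longleftrightarrow> (\<forall>n. s n \<in> odom A) \<and>
     (\<forall>e>0. \<exists>N. \<forall>m\<ge>N. \<forall>n\<ge>N. sqrt (Re (oapp A (s m - s n) (s m - s n))) < e)"

definition J_adj_dom :: "'a::real_normed_vector op \<Rightarrow> 'a set" where
  "J_adj_dom A = {y. \<forall>x0\<in>odom A. \<forall>e>0. \<exists>d>0. \<forall>x\<in>odom A.
        sqrt (Re (oapp A (x - x0) (x - x0))) < d \<longrightarrow> cmod (oapp A x y - oapp A x0 y) < e}"

definition J_adj_rep :: "'a::real_normed_vector op \<Rightarrow> 'a \<Rightarrow> (nat \<Rightarrow> 'a) \<Rightarrow> bool" where
  "J_adj_rep A y s \<longleftrightarrow> hA_cauchy A s \<and> (\<forall>x\<in>odom A. (\<lambda>n. oapp A x (s n)) \<longlonglongrightarrow> oapp A x y)"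

definition J_adj_norm2 :: "'a::real_normed_vector op \<Rightarrow> 'a \<Rightarrow> real" where
  "J_adj_norm2 A y = Re (lim (\<lambda>n. oapp A ((SOME s. J_adj_rep A y s) n) ((SOME s. J_adj_rep A y s) n)))"

definition op_ge :: "'a::real_normed_vector op \<Rightarrow> 'a op \<Rightarrow> bool" where
  "op_ge A B \<longleftrightarrow> J_adj_dom A \<subseteq> J_adj_dom B \<and>
     (\<forall>y\<in>J_adj_dom A. J_adj_norm2 A y \<ge> J_adj_norm2 B y)"

end

theory Submission
  imports Defs
begin

(*
  The energy form [x, y] = (a x, y) dominates \<gamma> ||x||^2, so the completion H of dom a lies in X.
  Minimising (a x, x) - 2 Re \<phi> x over dom a (Dirichlet principle) represents every functional
  \<phi> that is bounded for the energy norm by some h in H.  Applied to the elements of X*, this makes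
  A_F map onto X*, which together with Hahn-Banach gives self-adjointness.

  For maximality let y be in dom J_{A_F}*.  The same argument yields h in H with
  (A_F x, y) = [x, h], so that [J_{A_F}* y, J_{A_F}* y] = [h, h].  If A is any positive extension
  of a, surjectivity of A_F gives (A x, y) = (A x, h), and approximating h by elements of dom a
  in the energy norm, Cauchy-Schwarz for A gives |(A x, h)| <= [h, h]^(1/2) (A x, x)^(1/2).
  Hence y is in dom J_A* and [J_A* y, J_A* y]_A <= [h, h].
*)

section \<open>Hahn-Banach\<close>

text \<open>Graphs of real-linear functionals g on subspaces containing v, with g \<le> norm and
  g v = norm v; Zorn's lemma yields a maximal one, which is total.\<close>

definition norming_graphs :: "'a::real_normed_vector \<Rightarrow> ('a \<times> real) set set" where
  "norming_graphs v = {G. subspace G \<and> (\<forall>r. (0, r) \<in> G \<longrightarrow> r = 0) \<and>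
     (\<forall>(x, r)\<in>G. r \<le> norm x) \<and> range (\<lambda>t. (t *\<^sub>R v, t * norm v)) \<subseteq> G}"

lemma norming_graphsD:
  assumes "G \<in> norming_graphs v"
  shows "subspace G" "(0, r) \<in> G \<Longrightarrow> r = 0" "(x, r) \<in> G \<Longrightarrow> r \<le> norm x"
    "(t *\<^sub>R v, t * norm v) \<in> G"
  using assms by (auto simp: norming_graphs_def image_subset_iff)

lemma norming_graph_unique:
  assumes G: "G \<in> norming_graphs v" and "(x, r) \<in> G" "(x, r') \<in> G"
  shows "r = r'"
proof -
  have "(x, r) - (x, r') \<in> G" using subspace_diff[OF norming_graphsD(1)[OF G]] assms by blast
  then show ?thesis using norming_graphsD(2)[OF G, of "r - r'"] by simp
qed

lemma line_graph_in_norming_graphs: "range (\<lambda>t. (t *\<^sub>R v, t * norm v)) \<in> norming_graphs v"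
proof -
  let ?L = "range (\<lambda>t. (t *\<^sub>R v, t * norm v))"
  have "subspace ?L"
    unfolding subspace_def
  proof (intro conjI ballI allI)
    show "0 \<in> ?L" by (rule image_eqI[of _ _ 0]) (auto simp: zero_prod_def)
    fix p q assume "p \<in> ?L" "q \<in> ?L"
    then show "p + q \<in> ?L" by (auto intro!: image_eqI[of _ _ "_ + _"] simp: algebra_simps scaleR_add_left)
  next
    fix c p assume "p \<in> ?L"
    then show "c *\<^sub>R p \<in> ?L" by (auto intro!: image_eqI[of _ _ "c * _"])
  qed
  moreover have "\<forall>(x, r)\<in>?L. r \<le> norm x" by (auto intro!: mult_right_mono)
  ultimately show ?thesis by (auto simp: norming_graphs_def zero_prod_def)
qed

lemma Union_chain_in_norming_graphs:
  assumes "C \<noteq> {}" and C: "subset.chain (norming_graphs v) C"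
  shows "\<Union>C \<in> norming_graphs v"
proof -
  have sub: "C \<subseteq> norming_graphs v" and ch: "\<And>A B. A \<in> C \<Longrightarrow> B \<in> C \<Longrightarrow> A \<subseteq> B \<or> B \<subseteq> A"
    using C by (auto simp: subset.chain_def)
  have "subspace (\<Union>C)"
    unfolding subspace_def
  proof (intro conjI ballI allI)
    show "0 \<in> \<Union>C" using \<open>C \<noteq> {}\<close> sub subspace_0[OF norming_graphsD(1)] by blast
    fix p q assume "p \<in> \<Union>C" "q \<in> \<Union>C"
    then obtain A B where AB: "A \<in> C" "B \<in> C" "p \<in> A" "q \<in> B" by auto
    then have "p \<in> A \<union> B" "q \<in> A \<union> B" "A \<union> B \<in> C" using ch[OF AB(1,2)] by (auto simp: sup_absorb1 sup_absorb2)
    then show "p + q \<in> \<Union>C" using sub subspace_add[OF norming_graphsD(1)] by blast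
  next
    fix c p assume "p \<in> \<Union>C"
    then show "c *\<^sub>R p \<in> \<Union>C" using sub subspace_mul[OF norming_graphsD(1)] by blast
  qed
  moreover obtain G where "G \<in> C" using \<open>C \<noteq> {}\<close> by blast
  ultimately show ?thesis
    using sub norming_graphsD(2-4) unfolding norming_graphs_def by blast
qed

lemma norming_graph_extension_value:
  assumes G: "G \<in> norming_graphs v"
  shows "\<exists>c. \<forall>(x, r)\<in>G. r - norm (x - w) \<le> c \<and> c \<le> norm (x + w) - r"
proof -
  have sep: "r - norm (x - w) \<le> norm (y + w) - r'" if "(x, r) \<in> G" "(y, r') \<in> G" for x r y r'
  proof -
    have "(x + y, r + r') \<in> G" using subspace_add[OF norming_graphsD(1)[OF G] that] by simp
    then have "r + r' \<le> norm ((x - w) + (y + w))" using norming_graphsD(3)[OF G] by simp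
    also have "\<dots> \<le> norm (x - w) + norm (y + w)" by (rule norm_triangle_ineq)
    finally show ?thesis by simp
  qed
  let ?S = "{r - norm (x - w) | x r. (x, r) \<in> G}"
  have G0: "(0, 0) \<in> G" using subspace_0[OF norming_graphsD(1)[OF G]] by (simp add: zero_prod_def)
  have "?S \<noteq> {}" using G0 by blast
  moreover have "bdd_above ?S" using sep[OF _ G0] by (intro bdd_aboveI[of _ "norm w"]) auto
  ultimately show ?thesis using sep
    by (intro exI[of _ "Sup ?S"]) (auto intro!: cSup_upper cSup_least)
qed

lemma norming_graph_extension_bound:
  assumes G: "G \<in> norming_graphs v" and xr: "(x, r) \<in> G"
    and c: "\<forall>(x, r)\<in>G. r - norm (x - w) \<le> c \<and> c \<le> norm (x + w) - r"
  shows "r + t * c \<le> norm (x + t *\<^sub>R w)"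
proof (cases t "0::real" rule: linorder_cases)
  case less
  have "((- 1 / t) *\<^sub>R x, (- 1 / t) * r) \<in> G"
    using subspace_mul[OF norming_graphsD(1)[OF G] xr, of "- 1 / t"] by simp
  then have "(- 1 / t) * r - norm ((- 1 / t) *\<^sub>R x - w) \<le> c" using c by auto
  moreover have "(- 1 / t) *\<^sub>R x - w = (- 1 / t) *\<^sub>R (x + t *\<^sub>R w)"
    using less by (simp add: algebra_simps)
  ultimately have "(- 1 / t) * (r - norm (x + t *\<^sub>R w)) \<le> c"
    using less by (simp add: right_diff_distrib)
  then have "- t * ((- 1 / t) * (r - norm (x + t *\<^sub>R w))) \<le> - t * c"
    using less by (intro mult_left_mono) auto
  then show ?thesis using less by simp
next
  case equal
  then show ?thesis using norming_graphsD(3)[OF G xr] by simp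
next
  case greater
  have "((1 / t) *\<^sub>R x, (1 / t) * r) \<in> G"
    using subspace_mul[OF norming_graphsD(1)[OF G] xr, of "1 / t"] by simp
  then have "c \<le> norm ((1 / t) *\<^sub>R x + w) - (1 / t) * r" using c by auto
  moreover have "(1 / t) *\<^sub>R x + w = (1 / t) *\<^sub>R (x + t *\<^sub>R w)"
    using greater by (simp add: algebra_simps)
  ultimately have "c \<le> (1 / t) * (norm (x + t *\<^sub>R w) - r)"
    using greater by (simp add: right_diff_distrib)
  then have "t * c \<le> t * ((1 / t) * (norm (x + t *\<^sub>R w) - r))"
    using greater by (intro mult_left_mono) auto
  then show ?thesis using greater by simp
qed

lemma norming_graph_subset_extension:
  fixes w :: "'a::real_vector"
  shows "G \<subseteq> {(x + t *\<^sub>R w, r + t * c) | x r t. (x, r) \<in> G}"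
proof
  fix p assume "p \<in> G"
  moreover obtain x r where "p = (x, r)" by fastforce
  ultimately have "p = (x + 0 *\<^sub>R w, r + 0 * c) \<and> (x, r) \<in> G" by simp
  then show "p \<in> {(x + t *\<^sub>R w, r + t * c) | x r t. (x, r) \<in> G}" by blast
qed

lemma norming_graph_extend:
  assumes G: "G \<in> norming_graphs v" and w: "\<And>r. (w, r) \<notin> G"
    and c: "\<forall>(x, r)\<in>G. r - norm (x - w) \<le> c \<and> c \<le> norm (x + w) - r"
  shows "{(x + t *\<^sub>R w, r + t * c) | x r t. (x, r) \<in> G} \<in> norming_graphs v"
    (is "?G' \<in> _")
proof -
  have sG: "subspace G" by (rule norming_graphsD(1)[OF G])
  have "subspace ?G'"
    unfolding subspace_def
  proof (intro conjI ballI allI)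
    have "(0, 0) \<in> G" using subspace_0[OF sG] by (simp add: zero_prod_def)
    then have "(0 + 0 *\<^sub>R w, 0 + 0 * c) \<in> ?G'" by blast
    then show "0 \<in> ?G'" by (simp add: zero_prod_def)
    fix p q assume "p \<in> ?G'" "q \<in> ?G'"
    then obtain x r t y r' t' where "(x, r) \<in> G" "(y, r') \<in> G"
      and "p = (x + t *\<^sub>R w, r + t * c)" "q = (y + t' *\<^sub>R w, r' + t' * c)" by blast
    moreover have "(x + y, r + r') \<in> G" using subspace_add[OF sG] calculation(1,2) by fastforce
    moreover have "p + q = ((x + y) + (t + t') *\<^sub>R w, (r + r') + (t + t') * c)"
      using calculation(3,4) by (simp add: algebra_simps scaleR_add_left)
    ultimately show "p + q \<in> ?G'" by blast
  next
    fix k p assume "p \<in> ?G'"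
    then obtain x r t where "(x, r) \<in> G" "p = (x + t *\<^sub>R w, r + t * c)" by blast
    moreover have "(k *\<^sub>R x, k * r) \<in> G" using subspace_mul[OF sG] calculation(1) by fastforce
    moreover have "k *\<^sub>R p = (k *\<^sub>R x + (k * t) *\<^sub>R w, k * r + (k * t) * c)"
      using calculation(2) by (simp add: algebra_simps)
    ultimately show "k *\<^sub>R p \<in> ?G'" by blast
  qed
  moreover have "r0 = 0" if "(0, r0) \<in> ?G'" for r0
  proof -
    obtain x r t where xr: "(x, r) \<in> G" and x: "x + t *\<^sub>R w = 0" and r0: "r0 = r + t * c"
      using \<open>(0, r0) \<in> ?G'\<close> by auto
    have "t = 0"
    proof (rule ccontr)
      assume "t \<noteq> 0"
      then have "(- 1 / t) *\<^sub>R (x, r) = (w, - r / t)"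
        using x by (simp add: eq_neg_iff_add_eq_0[symmetric])
      then show False using w subspace_mul[OF sG xr] by metis
    qed
    then show ?thesis using x r0 norming_graphsD(2)[OF G] xr by simp
  qed
  moreover have "\<forall>(y, s)\<in>?G'. s \<le> norm y"
    using norming_graph_extension_bound[OF G _ c] by blast
  moreover have "range (\<lambda>t. (t *\<^sub>R v, t * norm v)) \<subseteq> ?G'"
    using G norming_graph_subset_extension[of G w c] by (auto simp: norming_graphs_def)
  ultimately show ?thesis unfolding norming_graphs_def by blast
qed

lemma hahn_banach_norming_functional:
  fixes v :: "'a::real_normed_vector"
  obtains g :: "'a \<Rightarrow> real"
  where "\<And>x y. g (x + y) = g x + g y" "\<And>r x. g (r *\<^sub>R x) = r * g x"
    and "\<And>x. \<bar>g x\<bar> \<le> norm x" and "g v = norm v"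
proof -
  have "\<exists>M\<in>norming_graphs v. \<forall>G\<in>norming_graphs v. M \<subseteq> G \<longrightarrow> G = M"
    by (rule subset_Zorn_nonempty)
      (use line_graph_in_norming_graphs Union_chain_in_norming_graphs in blast)+
  then obtain M where M: "M \<in> norming_graphs v" and max: "\<And>G. G \<in> norming_graphs v \<Longrightarrow> M \<subseteq> G \<Longrightarrow> G = M"
    by blast
  have total: "\<exists>r. (x, r) \<in> M" for x
  proof (rule ccontr)
    assume x: "\<nexists>r. (x, r) \<in> M"
    obtain c where c: "\<forall>(y, r)\<in>M. r - norm (y - x) \<le> c \<and> c \<le> norm (y + x) - r"
      using norming_graph_extension_value[OF M] by blast
    define E where "E = {(y + t *\<^sub>R x, r + t * c) | y r t. (y, r) \<in> M}"
    have "E \<in> norming_graphs v" unfolding E_def using norming_graph_extend[OF M _ c] x by blast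
    moreover have "M \<subseteq> E" unfolding E_def by (rule norming_graph_subset_extension)
    ultimately have "E = M" by (rule max)
    moreover have "(0, 0) \<in> M" using subspace_0[OF norming_graphsD(1)[OF M]] by (simp add: zero_prod_def)
    then have "(0 + 1 *\<^sub>R x, 0 + 1 * c) \<in> E" unfolding E_def by blast
    ultimately show False using x by simp
  qed
  define g where "g x = (THE r. (x, r) \<in> M)" for x
  have gM: "(x, g x) \<in> M" for x
    unfolding g_def by (rule theI') (use total norming_graph_unique[OF M] in blast)
  have g_eq: "g x = r" if "(x, r) \<in> M" for x r
    using norming_graph_unique[OF M that gM] by simp
  have add: "g (x + y) = g x + g y" for x y
    using g_eq subspace_add[OF norming_graphsD(1)[OF M] gM[of x] gM[of y]] by simp
  have scale: "g (r *\<^sub>R x) = r * g x" for r x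
    using g_eq subspace_mul[OF norming_graphsD(1)[OF M] gM[of x], of r] by simp
  have "\<bar>g x\<bar> \<le> norm x" for x
    using norming_graphsD(3)[OF M gM[of x]] norming_graphsD(3)[OF M gM[of "- x"]] scale[of "-1" x]
    by simp
  moreover have "g v = norm v" using g_eq norming_graphsD(4)[OF M, of 1] by simp
  ultimately show ?thesis using that add scale by blast
qed

section \<open>Complex structure and the conjugate dual\<close>

lemma homogeneous_bound_of_small_near_zero:
  fixes \<phi> :: "'a::real_vector \<Rightarrow> complex" and p :: "'a \<Rightarrow> real"
  assumes scale_closed: "\<And>x r. x \<in> S \<Longrightarrow> r *\<^sub>R x \<in> S"
    and \<phi>_scale: "\<And>x r. x \<in> S \<Longrightarrow> \<phi> (r *\<^sub>R x) = complex_of_real r * \<phi> x"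
    and p_scale: "\<And>x r. x \<in> S \<Longrightarrow> p (r *\<^sub>R x) = \<bar>r\<bar> * p x"
    and p_nonneg: "\<And>x. x \<in> S \<Longrightarrow> p x \<ge> 0"
    and "d > 0" and small: "\<And>x. x \<in> S \<Longrightarrow> p x < d \<Longrightarrow> cmod (\<phi> x) < 1"
  shows "\<exists>K. \<forall>x\<in>S. cmod (\<phi> x) \<le> K * p x"
proof (intro exI ballI)
  fix x assume x: "x \<in> S"
  show "cmod (\<phi> x) \<le> (2 / d) * p x"
  proof (cases "p x = 0")
    case True
    show ?thesis
    proof (rule ccontr)
      assume "\<not> ?thesis"
      then have pos: "cmod (\<phi> x) > 0" using True by simp
      define r where "r = 2 / cmod (\<phi> x)"
      have "p (r *\<^sub>R x) = 0" using p_scale[OF x] True by simp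
      then have "cmod (\<phi> (r *\<^sub>R x)) < 1" using small[OF scale_closed[OF x]] \<open>d > 0\<close> by simp
      moreover have "cmod (\<phi> (r *\<^sub>R x)) = 2" using \<phi>_scale[OF x, of r] pos
        by (simp add: r_def norm_mult norm_divide)
      ultimately show False by simp
    qed
  next
    case False
    then have px: "p x > 0" using p_nonneg[OF x] by simp
    define r where "r = d / (2 * p x)"
    have r: "r > 0" using px \<open>d > 0\<close> r_def by simp
    have "p (r *\<^sub>R x) = d / 2" using p_scale[OF x, of r] r px \<open>d > 0\<close> by (simp add: r_def)
    then have "cmod (\<phi> (r *\<^sub>R x)) < 1" using small[OF scale_closed[OF x]] \<open>d > 0\<close> by simp
    then have "r * cmod (\<phi> x) < 1" using \<phi>_scale[OF x, of r] r by (simp add: norm_mult)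
    then have "cmod (\<phi> x) < 1 / r" using r by (simp add: field_simps)
    also have "1 / r = (2 / d) * p x" using r_def \<open>d > 0\<close> px by simp
    finally show ?thesis by simp
  qed
qed

locale complex_structure =
  fixes sm :: "complex \<Rightarrow> 'a::real_normed_vector \<Rightarrow> 'a"
  assumes cplx: "cplx_space sm"
begin

lemma sm_of_real: "sm (complex_of_real r) x = r *\<^sub>R x" using cplx by (simp add: cplx_space_def)
lemma sm_add: "sm c (x + y) = sm c x + sm c y" using cplx by (simp add: cplx_space_def)
lemma sm_add_left: "sm (c + d) x = sm c x + sm d x" using cplx by (simp add: cplx_space_def)
lemma sm_sm: "sm c (sm d x) = sm (c * d) x" using cplx by (simp add: cplx_space_def)
lemma norm_sm: "norm (sm c x) = cmod c * norm x" using cplx by (simp add: cplx_space_def)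

lemma sm_zero [simp]: "sm c 0 = 0" using sm_add[of c 0 0] by simp
lemma sm_zero_left [simp]: "sm 0 x = 0" using sm_of_real[of 0 x] by simp
lemma sm_minus_one: "sm (- 1) x = - x" using sm_of_real[of "- 1" x] by simp
lemma sm_minus: "sm c (- x) = - sm c x"
  using sm_add[of c x "- x"] by (simp add: eq_neg_iff_add_eq_0 add.commute)
lemma sm_diff: "sm c (x - y) = sm c x - sm c y" using sm_add[of c x "- y"] sm_minus by simp
lemma sm_scaleR: "sm c (r *\<^sub>R x) = r *\<^sub>R sm c x" by (metis sm_of_real sm_sm mult.commute)

lemma tendsto_sm:
  assumes "s \<longlonglongrightarrow> x"
  shows "(\<lambda>n. sm c (s n)) \<longlonglongrightarrow> sm c x"
proof -
  have "(\<lambda>n. norm (s n - x)) \<longlonglongrightarrow> 0" using assms by (simp add: LIM_zero_iff tendsto_norm_zero_iff)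
  then have "(\<lambda>n. norm (sm c (s n) - sm c x)) \<longlonglongrightarrow> 0"
    unfolding sm_diff[symmetric] norm_sm by (rule tendsto_mult_right_zero)
  then show ?thesis by (simp add: LIM_zero_iff tendsto_norm_zero_iff)
qed

lemma cdualD:
  assumes "v \<in> cdual sm"
  shows "v (x + y) = v x + v y" "v (sm c x) = cnj c * v x" "continuous_on UNIV v"
  using assms by (auto simp: cdual_def)

lemma cdual_zero: "v \<in> cdual sm \<Longrightarrow> v 0 = 0" using cdualD(1)[of v 0 0] by simp
lemma cdual_minus: "v \<in> cdual sm \<Longrightarrow> v (- x) = - v x"
  using cdualD(1)[of v x "- x"] cdual_zero[of v] by (simp add: eq_neg_iff_add_eq_0 add.commute)
lemma cdual_diff: "v \<in> cdual sm \<Longrightarrow> v (x - y) = v x - v y"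
  using cdualD(1)[of v x "- y"] cdual_minus[of v y] by simp
lemma cdual_scaleR: "v \<in> cdual sm \<Longrightarrow> v (r *\<^sub>R x) = complex_of_real r * v x"
  using cdualD(2)[of v "complex_of_real r" x] by (simp add: sm_of_real)
lemma cdual_tendsto: "v \<in> cdual sm \<Longrightarrow> s \<longlonglongrightarrow> x \<Longrightarrow> (\<lambda>n. v (s n)) \<longlonglongrightarrow> v x"
  using cdualD(3)[of v] by (metis continuous_on_tendsto_compose UNIV_I eventually_sequentially)

lemma cdual_bounded:
  assumes v: "v \<in> cdual sm"
  obtains K where "\<And>x. cmod (v x) \<le> K * norm x"
proof -
  have "continuous (at 0) v" using cdualD(3)[OF v] by (simp add: continuous_on_eq_continuous_at)
  then obtain d where d: "d > 0" "\<And>x. dist x 0 < d \<Longrightarrow> dist (v x) (v 0) < 1"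
    unfolding continuous_at_eps_delta by (meson zero_less_one)
  have "\<exists>K. \<forall>x\<in>UNIV. cmod (v x) \<le> K * norm x"
    by (rule homogeneous_bound_of_small_near_zero[where d = d])
      (use d cdual_zero[OF v] cdual_scaleR[OF v] in auto)
  then show ?thesis using that by blast
qed

lemma cdualI_bounded:
  assumes add: "\<And>x y. f (x + y) = f x + f y" and conj: "\<And>c x. f (sm c x) = cnj c * f x"
    and bound: "\<And>x. cmod (f x) \<le> K * norm x"
  shows "f \<in> cdual sm"
proof -
  have "bounded_linear f"
  proof (rule bounded_linear_intro[OF add])
    show "f (r *\<^sub>R x) = r *\<^sub>R f x" for r x
      using conj[of "complex_of_real r" x] by (simp add: sm_of_real scaleR_conv_of_real)
    show "norm (f x) \<le> norm x * K" for x using bound[of x] by (simp add: mult.commute)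
  qed
  then show ?thesis unfolding cdual_def using add conj by (auto intro: linear_continuous_on)
qed

text \<open>Complexification of a real norming functional g: f x = g x + i g (i x).\<close>

lemma hahn_banach_cdual:
  assumes "w \<noteq> 0"
  obtains f where "f \<in> cdual sm" and "f w \<noteq> 0"
proof -
  obtain g where g_add: "\<And>x y. g (x + y) = g x + g y" and g_scale: "\<And>r x. g (r *\<^sub>R x) = r * g x"
    and g_bound: "\<And>x. \<bar>g x\<bar> \<le> norm x" and gw: "g w = norm w"
    using hahn_banach_norming_functional[of w] by blast
  define f where "f x = complex_of_real (g x) + \<i> * complex_of_real (g (sm \<i> x))" for x
  have f_add: "f (x + y) = f x + f y" for x y by (simp add: f_def g_add sm_add algebra_simps)
  have f_scale: "f (r *\<^sub>R x) = complex_of_real r * f x" for r x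
    by (simp add: f_def g_scale sm_scaleR algebra_simps)
  have f_i: "f (sm \<i> x) = - \<i> * f x" for x
  proof -
    have "sm \<i> (sm \<i> x) = - x" using sm_sm[of \<i> \<i> x] sm_minus_one by simp
    moreover have "g (- x) = - g x" using g_scale[of "- 1" x] by simp
    ultimately show ?thesis by (simp add: f_def algebra_simps)
  qed
  have "f (sm c x) = cnj c * f x" for c x
  proof -
    have "c = complex_of_real (Re c) + complex_of_real (Im c) * \<i>" by (simp add: complex_eq_iff)
    then have "sm c x = Re c *\<^sub>R x + Im c *\<^sub>R sm \<i> x" by (metis sm_add_left sm_sm sm_of_real)
    then have "f (sm c x) = Re c * f x + Im c * (- \<i> * f x)" by (simp add: f_add f_scale f_i)
    also have "\<dots> = cnj c * f x" by (simp add: complex_eq_iff algebra_simps)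
    finally show ?thesis .
  qed
  moreover have "cmod (f x) \<le> 2 * norm x" for x
  proof -
    have "cmod (f x) \<le> \<bar>g x\<bar> + \<bar>g (sm \<i> x)\<bar>" unfolding f_def
      by (metis norm_triangle_ineq norm_of_real norm_mult norm_ii mult_1)
    also have "\<dots> \<le> norm x + norm (sm \<i> x)" using g_bound by (intro add_mono) auto
    finally show ?thesis by (simp add: norm_sm)
  qed
  ultimately have "f \<in> cdual sm" using f_add by (intro cdualI_bounded) auto
  moreover have "Re (f w) = norm w" by (simp add: f_def gw)
  then have "f w \<noteq> 0" using assms by auto
  ultimately show ?thesis using that by blast
qed

lemma cdual_separates_points:
  assumes "\<And>f. f \<in> cdual sm \<Longrightarrow> f x = f y"
  shows "x = y"
proof (rule ccontr)
  assume "x \<noteq> y"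
  then obtain f where f: "f \<in> cdual sm" "f (x - y) \<noteq> 0" using hahn_banach_cdual[of "x - y"] by auto
  then show False using assms[OF f(1)] cdual_diff[OF f(1)] by simp
qed

lemma cdual_eq_on_dense:
  assumes "closure S = UNIV" "v \<in> cdual sm" "w \<in> cdual sm" "\<And>x. x \<in> S \<Longrightarrow> v x = w x"
  shows "v = w"
proof
  fix x
  have "x \<in> closure S" using assms by simp
  then obtain s where s: "\<And>n. s n \<in> S" "s \<longlonglongrightarrow> x" unfolding closure_sequential by blast
  have "(\<lambda>n. v (s n)) \<longlonglongrightarrow> v x" by (rule cdual_tendsto[OF assms(2) s(2)])
  moreover have "(\<lambda>n. v (s n)) \<longlonglongrightarrow> w x"
    using cdual_tendsto[OF assms(3) s(2)] assms(4)[OF s(1)] by simp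
  ultimately show "v x = w x" using LIMSEQ_unique by blast
qed

lemma cdual_add: "v \<in> cdual sm \<Longrightarrow> w \<in> cdual sm \<Longrightarrow> (\<lambda>z. v z + w z) \<in> cdual sm"
  unfolding cdual_def by (auto simp: algebra_simps intro: continuous_on_add)

lemma cdual_cmult: "v \<in> cdual sm \<Longrightarrow> (\<lambda>z. c * v z) \<in> cdual sm"
  unfolding cdual_def by (auto simp: algebra_simps intro: continuous_on_mult_left)

lemma uniformly_continuous_on_if_bounded:
  assumes diff: "\<And>x y. x \<in> S \<Longrightarrow> y \<in> S \<Longrightarrow> x - y \<in> S \<and> f (x - y) = f x - f y"
    and bound: "\<And>y. y \<in> S \<Longrightarrow> cmod (f y) \<le> K * norm y"
  shows "uniformly_continuous_on S f"
  unfolding uniformly_continuous_on_def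
proof (intro allI impI)
  fix e :: real assume e: "e > 0"
  define K' where "K' = \<bar>K\<bar> + 1"
  have K': "K' > 0" by (simp add: K'_def add_nonneg_pos)
  have "dist (f y') (f y) < e" if "y \<in> S" "y' \<in> S" "dist y' y < e / K'" for y y'
  proof -
    have "dist (f y') (f y) = cmod (f (y' - y))" using diff that by (simp add: dist_norm)
    also have "\<dots> \<le> K * norm (y' - y)" using bound diff that by blast
    also have "\<dots> \<le> K' * norm (y' - y)" by (intro mult_right_mono) (auto simp: K'_def)
    also have "\<dots> < K' * (e / K')" using that K' by (intro mult_strict_left_mono) (auto simp: dist_norm)
    finally show ?thesis using K' by simp
  qed
  moreover have "e / K' > 0" using e K' by simp
  ultimately show "\<exists>d>0. \<forall>y\<in>S. \<forall>y'\<in>S. dist y' y < d \<longrightarrow> dist (f y') (f y) < e" by blast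
qed

lemma cdual_extension_of_dense:
  assumes S: "closure S = UNIV" "\<And>x y. x \<in> S \<Longrightarrow> y \<in> S \<Longrightarrow> x + y \<in> S" "\<And>c x. x \<in> S \<Longrightarrow> sm c x \<in> S"
    and add: "\<And>x y. x \<in> S \<Longrightarrow> y \<in> S \<Longrightarrow> f (x + y) = f x + f y"
    and conj: "\<And>c x. x \<in> S \<Longrightarrow> f (sm c x) = cnj c * f x"
    and bound: "\<And>y. y \<in> S \<Longrightarrow> cmod (f y) \<le> K * norm y"
  shows "\<exists>g\<in>cdual sm. \<forall>y\<in>S. g y = f y"
proof -
  have diff: "x - y \<in> S \<and> f (x - y) = f x - f y" if x: "x \<in> S" and y: "y \<in> S" for x y
  proof -
    have my: "- y \<in> S" using S(3)[OF y, of "- 1"] unfolding sm_minus_one .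
    have "f (- y) = cnj (- 1) * f y" using conj[OF y, of "- 1"] unfolding sm_minus_one .
    then have "f (x + - y) = f x - f y" using add[OF x my] by simp
    then show ?thesis using S(2)[OF x my] by simp
  qed
  obtain g where gu: "uniformly_continuous_on (closure S) g" and gS: "\<And>y. y \<in> S \<Longrightarrow> f y = g y"
    using uniformly_continuous_on_extension_on_closure[OF uniformly_continuous_on_if_bounded[OF diff bound]]
    by metis
  have gc: "continuous_on UNIV g" using gu S(1) uniformly_continuous_imp_continuous by metis
  have g_tendsto: "(\<lambda>n. g (s n)) \<longlonglongrightarrow> g u" if "s \<longlonglongrightarrow> u" for s u
    using gc that by (metis continuous_on_tendsto_compose UNIV_I eventually_sequentially)
  have approx: "\<exists>s. (\<forall>n. s n \<in> S) \<and> s \<longlonglongrightarrow> u" for u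
    using S(1) closure_sequential[of u S] by blast
  have "g (u + v) = g u + g v" for u v
  proof -
    obtain s t where s: "\<And>n. s n \<in> S" "s \<longlonglongrightarrow> u" and t: "\<And>n. t n \<in> S" "t \<longlonglongrightarrow> v"
      using approx by metis
    have "(\<lambda>n. g (s n + t n)) \<longlonglongrightarrow> g (u + v)" by (intro g_tendsto tendsto_add s t)
    moreover have "g (s n + t n) = g (s n) + g (t n)" for n using gS add S(2) s t by metis
    ultimately have "(\<lambda>n. g (s n) + g (t n)) \<longlonglongrightarrow> g (u + v)" by simp
    moreover have "(\<lambda>n. g (s n) + g (t n)) \<longlonglongrightarrow> g u + g v" by (intro tendsto_add g_tendsto s t)
    ultimately show ?thesis using LIMSEQ_unique by blast
  qed
  moreover have "g (sm c u) = cnj c * g u" for c u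
  proof -
    obtain s where s: "\<And>n. s n \<in> S" "s \<longlonglongrightarrow> u" using approx by metis
    have "(\<lambda>n. g (sm c (s n))) \<longlonglongrightarrow> g (sm c u)" by (intro g_tendsto tendsto_sm s)
    moreover have "g (sm c (s n)) = cnj c * g (s n)" for n using gS conj S(3) s by metis
    ultimately have "(\<lambda>n. cnj c * g (s n)) \<longlonglongrightarrow> g (sm c u)" by simp
    moreover have "(\<lambda>n. cnj c * g (s n)) \<longlonglongrightarrow> cnj c * g u" by (intro tendsto_mult_left g_tendsto s)
    ultimately show ?thesis using LIMSEQ_unique by blast
  qed
  ultimately have "g \<in> cdual sm" using gc by (simp add: cdual_def)
  then show ?thesis using gS by metis
qed

end

section \<open>Positive operators and the spaces H_T\<close>

lemma discriminant_le_of_quadratic_nonneg: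
  fixes A B C :: real
  assumes nonneg: "\<And>t. 0 \<le> A - 2 * t * B + t * t * B * C" and "B \<ge> 0" "C \<ge> 0"
  shows "B \<le> A * C"
proof (cases "B = 0")
  case True
  then show ?thesis using nonneg[of 0] \<open>C \<ge> 0\<close> by simp
next
  case False
  then have B: "B > 0" using \<open>B \<ge> 0\<close> by simp
  show ?thesis
  proof (cases "C = 0")
    case True
    have "0 \<le> A - 2 * ((A + 1) / (2 * B)) * B" using nonneg[of "(A + 1) / (2 * B)"] True by simp
    also have "\<dots> = - 1" using B by (simp add: field_simps)
    finally show ?thesis by simp
  next
    case False
    then have C: "C > 0" using \<open>C \<ge> 0\<close> by simp
    have "0 \<le> A - 2 * (1 / C) * B + (1 / C) * (1 / C) * B * C" by (rule nonneg)
    also have "\<dots> = A - B / C" using C by (simp add: field_simps)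
    finally show ?thesis using C by (simp add: field_simps)
  qed
qed

locale positive_operator = complex_structure sm for sm :: "complex \<Rightarrow> 'a::real_normed_vector \<Rightarrow> 'a" +
  fixes T :: "'a op"
  assumes op: "is_op sm T" and pos: "positive_op T"
begin

abbreviation "DT \<equiv> odom T"
abbreviation "ap \<equiv> oapp T"

text \<open>The norm of H_T, evaluated on representatives: enorm x is the norm of T x in H_T.\<close>
definition enorm :: "'a \<Rightarrow> real" where "enorm x = sqrt (Re (ap x x))"

lemma dom_zero [simp]: "0 \<in> DT" using op by (simp add: is_op_def)
lemma dom_add: "x \<in> DT \<Longrightarrow> y \<in> DT \<Longrightarrow> x + y \<in> DT" using op by (simp add: is_op_def)
lemma dom_sm: "x \<in> DT \<Longrightarrow> sm c x \<in> DT" using op by (simp add: is_op_def)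
lemma dom_minus: "x \<in> DT \<Longrightarrow> - x \<in> DT" using dom_sm[of x "- 1"] sm_minus_one by simp
lemma dom_diff: "x \<in> DT \<Longrightarrow> y \<in> DT \<Longrightarrow> x - y \<in> DT" using dom_add[of x "- y"] dom_minus by simp
lemma dom_scaleR: "x \<in> DT \<Longrightarrow> r *\<^sub>R x \<in> DT" using dom_sm[of x "complex_of_real r"] sm_of_real by simp

lemma ap_cdual: "x \<in> DT \<Longrightarrow> ap x \<in> cdual sm" using op by (simp add: is_op_def)
lemma ap_add: "x \<in> DT \<Longrightarrow> y \<in> DT \<Longrightarrow> ap (x + y) z = ap x z + ap y z"
  using op by (simp add: is_op_def)
lemma ap_sm: "x \<in> DT \<Longrightarrow> ap (sm c x) z = c * ap x z" using op by (simp add: is_op_def)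
lemma ap_minus: "x \<in> DT \<Longrightarrow> ap (- x) z = - ap x z" using ap_sm[of x "- 1"] sm_minus_one by simp
lemma ap_diff: "x \<in> DT \<Longrightarrow> y \<in> DT \<Longrightarrow> ap (x - y) z = ap x z - ap y z"
  using ap_add[of x "- y"] ap_minus dom_minus by simp
lemma ap_scaleR: "x \<in> DT \<Longrightarrow> ap (r *\<^sub>R x) z = complex_of_real r * ap x z"
  using ap_sm[of x "complex_of_real r"] sm_of_real by simp
lemma ap_zero [simp]: "ap 0 z = 0" using ap_sm[of 0 0] by simp

lemma ap_add_right: "x \<in> DT \<Longrightarrow> ap x (y + z) = ap x y + ap x z" using cdualD(1)[OF ap_cdual] by blast
lemma ap_sm_right: "x \<in> DT \<Longrightarrow> ap x (sm c y) = cnj c * ap x y" using cdualD(2)[OF ap_cdual] by blast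
lemma ap_diff_right: "x \<in> DT \<Longrightarrow> ap x (y - z) = ap x y - ap x z" using cdual_diff[OF ap_cdual] by blast
lemma ap_scaleR_right: "x \<in> DT \<Longrightarrow> ap x (r *\<^sub>R y) = complex_of_real r * ap x y"
  using cdual_scaleR[OF ap_cdual] by blast
lemma ap_zero_right: "x \<in> DT \<Longrightarrow> ap x 0 = 0" using cdual_zero[OF ap_cdual] by blast
lemma ap_tendsto_right: "x \<in> DT \<Longrightarrow> s \<longlonglongrightarrow> y \<Longrightarrow> (\<lambda>n. ap x (s n)) \<longlonglongrightarrow> ap x y"
  using cdual_tendsto[OF ap_cdual] by blast

lemma Im_ap_diag: "x \<in> DT \<Longrightarrow> Im (ap x x) = 0" using pos unfolding positive_op_def by blast
lemma Re_ap_diag_nonneg: "x \<in> DT \<Longrightarrow> Re (ap x x) \<ge> 0" using pos unfolding positive_op_def by blast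

lemma ap_add_add:
  "x \<in> DT \<Longrightarrow> y \<in> DT \<Longrightarrow> ap (x + y) (x + y) = ap x x + ap x y + ap y x + ap y y"
  by (simp add: ap_add ap_add_right)

text \<open>Positivity forces hermitian symmetry: take imaginary parts of (T(x+y), x+y) and of
  (T(x + i y), x + i y).\<close>

lemma ap_hermitian:
  assumes x: "x \<in> DT" and y: "y \<in> DT"
  shows "ap y x = cnj (ap x y)"
proof -
  have "Im (ap (x + y) (x + y)) = 0" using Im_ap_diag dom_add x y by blast
  then have im: "Im (ap x y) + Im (ap y x) = 0"
    using ap_add_add[OF x y] Im_ap_diag[OF x] Im_ap_diag[OF y] by simp
  have iy: "sm \<i> y \<in> DT" using dom_sm y by blast
  have "Im (ap (x + sm \<i> y) (x + sm \<i> y)) = 0" using Im_ap_diag dom_add x iy by blast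
  moreover have "ap (x + sm \<i> y) (x + sm \<i> y) = ap x x - \<i> * ap x y + \<i> * ap y x + ap y y"
    using ap_add_add[OF x iy] ap_sm[OF y] ap_sm_right[OF x] ap_sm_right[OF y] by simp
  ultimately have "Re (ap y x) - Re (ap x y) = 0" using Im_ap_diag[OF x] Im_ap_diag[OF y] by simp
  with im show ?thesis by (simp add: complex_eq_iff)
qed

lemma enorm_nonneg: "x \<in> DT \<Longrightarrow> enorm x \<ge> 0" by (simp add: enorm_def Re_ap_diag_nonneg)
lemma enorm_square: "x \<in> DT \<Longrightarrow> (enorm x)\<^sup>2 = Re (ap x x)"
  by (simp add: enorm_def Re_ap_diag_nonneg)
lemma ap_diag: "x \<in> DT \<Longrightarrow> ap x x = complex_of_real ((enorm x)\<^sup>2)"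
  using Im_ap_diag enorm_square by (simp add: complex_eq_iff)
lemma enorm_zero [simp]: "enorm 0 = 0" by (simp add: enorm_def)

lemma Re_ap_add_sm_diag:
  assumes x: "x \<in> DT" and y: "y \<in> DT"
  shows "Re (ap (x + sm t y) (x + sm t y)) = Re (ap x x) + 2 * Re (cnj t * ap x y) + (cmod t)\<^sup>2 * Re (ap y y)"
proof -
  have ty: "sm t y \<in> DT" using dom_sm y by blast
  have "ap (sm t y) (sm t y) = complex_of_real ((cmod t)\<^sup>2) * ap y y"
    using ap_sm[OF y] ap_sm_right[OF y] complex_norm_square[of t] by (simp add: mult.commute)
  moreover have "Re (ap (sm t y) x) = Re (cnj t * ap x y)"
    using ap_hermitian[OF x ty] ap_sm_right[OF x] by simp
  ultimately show ?thesis using ap_add_add[OF x ty] ap_sm_right[OF x] by simp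
qed

lemma ap_cauchy_schwarz:
  assumes x: "x \<in> DT" and y: "y \<in> DT"
  shows "cmod (ap x y) \<le> enorm x * enorm y"
proof -
  define b where "b = ap x y"
  have "(cmod b)\<^sup>2 \<le> Re (ap x x) * Re (ap y y)"
  proof (rule discriminant_le_of_quadratic_nonneg)
    fix t :: real
    let ?c = "- (complex_of_real t * b)"
    have "0 \<le> Re (ap (x + sm ?c y) (x + sm ?c y))" using Re_ap_diag_nonneg dom_add dom_sm x y by blast
    also have "\<dots> = Re (ap x x) + 2 * Re (cnj ?c * b) + (cmod ?c)\<^sup>2 * Re (ap y y)"
      using Re_ap_add_sm_diag[OF x y] b_def by simp
    also have "cnj ?c * b = - complex_of_real (t * (cmod b)\<^sup>2)"
      using complex_norm_square[of b] by (simp add: mult.commute)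
    also have "(cmod ?c)\<^sup>2 = t * t * (cmod b)\<^sup>2" by (simp add: norm_mult power2_eq_square)
    finally show "0 \<le> Re (ap x x) - 2 * t * (cmod b)\<^sup>2 + t * t * (cmod b)\<^sup>2 * Re (ap y y)"
      by (simp add: algebra_simps)
  qed (use Re_ap_diag_nonneg y in auto)
  then have "cmod b \<le> sqrt (Re (ap x x) * Re (ap y y))" by (simp add: real_le_rsqrt)
  then show ?thesis by (simp add: enorm_def b_def real_sqrt_mult)
qed

lemma enorm_triangle:
  assumes x: "x \<in> DT" and y: "y \<in> DT"
  shows "enorm (x + y) \<le> enorm x + enorm y"
proof -
  have "Re (ap x y) \<le> enorm x * enorm y"
    using ap_cauchy_schwarz[OF x y] complex_Re_le_cmod order_trans by blast
  moreover have "Re (ap y x) = Re (ap x y)" using ap_hermitian[OF x y] by simp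
  ultimately have "(enorm (x + y))\<^sup>2 \<le> (enorm x + enorm y)\<^sup>2"
    using enorm_square dom_add ap_add_add x y by (simp add: power2_eq_square algebra_simps)
  then show ?thesis by (rule power2_le_imp_le) (simp add: enorm_nonneg x y)
qed

lemma enorm_sm: "x \<in> DT \<Longrightarrow> enorm (sm c x) = cmod c * enorm x"
proof -
  assume x: "x \<in> DT"
  have "ap (sm c x) (sm c x) = complex_of_real ((cmod c)\<^sup>2) * ap x x"
    using ap_sm[OF x] ap_sm_right[OF x] complex_norm_square[of c] by (simp add: mult.commute)
  then show ?thesis by (simp add: enorm_def real_sqrt_mult)
qed

lemma enorm_scaleR: "x \<in> DT \<Longrightarrow> enorm (r *\<^sub>R x) = \<bar>r\<bar> * enorm x"
  using enorm_sm[of x "complex_of_real r"] sm_of_real by simp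

lemma enorm_minus_commute: "x \<in> DT \<Longrightarrow> y \<in> DT \<Longrightarrow> enorm (x - y) = enorm (y - x)"
  using enorm_scaleR[of "y - x" "- 1"] dom_diff by simp

lemma enorm_triangle_diff: "x \<in> DT \<Longrightarrow> y \<in> DT \<Longrightarrow> \<bar>enorm x - enorm y\<bar> \<le> enorm (x - y)"
  using enorm_triangle[of "x - y" y] enorm_triangle[of "y - x" x] enorm_minus_commute[of x y] dom_diff
  by fastforce

lemma hA_cauchy_iff:
  "hA_cauchy T s \<longleftrightarrow> (\<forall>n. s n \<in> DT) \<and> (\<forall>e>0. \<exists>N. \<forall>m\<ge>N. \<forall>n\<ge>N. enorm (s m - s n) < e)"
  by (simp add: hA_cauchy_def enorm_def)

lemma hA_cauchyD:
  assumes "hA_cauchy T s"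
  shows "s n \<in> DT" and "e > 0 \<Longrightarrow> \<exists>N. \<forall>m\<ge>N. \<forall>n\<ge>N. enorm (s m - s n) < e"
  using assms by (auto simp: hA_cauchy_iff)

lemma hA_cauchy_enorm_Cauchy:
  assumes s: "hA_cauchy T s"
  shows "Cauchy (\<lambda>n. enorm (s n))"
  unfolding Cauchy_def
proof (intro allI impI)
  fix e :: real assume "e > 0"
  then obtain N where N: "\<forall>m\<ge>N. \<forall>n\<ge>N. enorm (s m - s n) < e" using hA_cauchyD(2)[OF s] by blast
  have "dist (enorm (s m)) (enorm (s n)) < e" if "m \<ge> N" "n \<ge> N" for m n
  proof -
    have "\<bar>enorm (s m) - enorm (s n)\<bar> \<le> enorm (s m - s n)"
      by (intro enorm_triangle_diff hA_cauchyD(1)[OF s])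
    moreover have "enorm (s m - s n) < e" using N that by blast
    ultimately show ?thesis by (simp add: dist_real_def)
  qed
  then show "\<exists>M. \<forall>m\<ge>M. \<forall>n\<ge>M. dist (enorm (s m)) (enorm (s n)) < e" by blast
qed

lemma hA_cauchy_enorm_bounded:
  assumes "hA_cauchy T s"
  obtains M where "M > 0" and "\<And>n. enorm (s n) \<le> M"
proof -
  obtain K where "K > 0" "\<forall>n. norm (enorm (s n)) \<le> K"
    using BseqE[OF Cauchy_Bseq[OF hA_cauchy_enorm_Cauchy[OF assms]]] by blast
  then show ?thesis using that by (auto simp: abs_le_iff)
qed

lemma hA_cauchy_add:
  assumes s: "hA_cauchy T s" and t: "hA_cauchy T t"
  shows "hA_cauchy T (\<lambda>n. s n + t n)"
  unfolding hA_cauchy_iff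
proof (intro conjI allI impI)
  fix n show "s n + t n \<in> DT" using dom_add hA_cauchyD(1) s t by blast
next
  fix e :: real assume "e > 0"
  then obtain N1 N2 where N1: "\<forall>m\<ge>N1. \<forall>n\<ge>N1. enorm (s m - s n) < e / 2"
    and N2: "\<forall>m\<ge>N2. \<forall>n\<ge>N2. enorm (t m - t n) < e / 2"
    using hA_cauchyD(2)[OF s, of "e / 2"] hA_cauchyD(2)[OF t, of "e / 2"] by auto
  have "enorm (s m + t m - (s n + t n)) < e" if "m \<ge> max N1 N2" "n \<ge> max N1 N2" for m n
  proof -
    have "enorm (s m + t m - (s n + t n)) \<le> enorm (s m - s n) + enorm (t m - t n)"
      unfolding add_diff_add by (intro enorm_triangle dom_diff hA_cauchyD(1) s t)
    moreover have "enorm (s m - s n) < e / 2" "enorm (t m - t n) < e / 2" using N1 N2 that by auto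
    ultimately show ?thesis by linarith
  qed
  then show "\<exists>N. \<forall>m\<ge>N. \<forall>n\<ge>N. enorm (s m + t m - (s n + t n)) < e" by blast
qed

lemma hA_cauchy_sm:
  assumes s: "hA_cauchy T s"
  shows "hA_cauchy T (\<lambda>n. sm c (s n))"
  unfolding hA_cauchy_iff
proof (intro conjI allI impI)
  fix n show "sm c (s n) \<in> DT" using dom_sm hA_cauchyD(1)[OF s] by blast
next
  fix e :: real assume "e > 0"
  then obtain N where N: "\<forall>m\<ge>N. \<forall>n\<ge>N. enorm (s m - s n) < e / (cmod c + 1)"
    using hA_cauchyD(2)[OF s, of "e / (cmod c + 1)"] add_pos_nonneg[of 1 "cmod c"] by auto
  have "enorm (sm c (s m) - sm c (s n)) < e" if "m \<ge> N" "n \<ge> N" for m n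
  proof -
    have d: "s m - s n \<in> DT" by (intro dom_diff hA_cauchyD(1)[OF s])
    have "enorm (sm c (s m) - sm c (s n)) = cmod c * enorm (s m - s n)"
      using enorm_sm[OF d] by (simp add: sm_diff)
    also have "\<dots> \<le> (cmod c + 1) * enorm (s m - s n)"
      using enorm_nonneg[OF d] by (simp add: mult_right_mono)
    also have "\<dots> < (cmod c + 1) * (e / (cmod c + 1))"
      using N that by (intro mult_strict_left_mono) (auto simp: add_nonneg_pos)
    also have "\<dots> = e" using add_pos_nonneg[of 1 "cmod c"] by simp
    finally show ?thesis .
  qed
  then show "\<exists>N. \<forall>m\<ge>N. \<forall>n\<ge>N. enorm (sm c (s m) - sm c (s n)) < e" by blast
qed

lemma hA_cauchy_diff: "hA_cauchy T s \<Longrightarrow> hA_cauchy T t \<Longrightarrow> hA_cauchy T (\<lambda>n. s n - t n)"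
  using hA_cauchy_add[of s "\<lambda>n. - t n"] hA_cauchy_sm[of t "- 1"] by (simp add: sm_minus_one)

lemma hA_cauchy_const: "x \<in> DT \<Longrightarrow> hA_cauchy T (\<lambda>n. x)"
  by (simp add: hA_cauchy_iff)

lemma ap_diff_le:
  assumes "x \<in> DT" "x' \<in> DT" "y \<in> DT" "y' \<in> DT"
  shows "cmod (ap x y - ap x' y') \<le> enorm (x - x') * enorm y + enorm x' * enorm (y - y')"
proof -
  have "ap x y - ap x' y' = ap (x - x') y + ap x' (y - y')"
    using assms by (simp add: ap_diff ap_diff_right)
  then have "cmod (ap x y - ap x' y') \<le> cmod (ap (x - x') y) + cmod (ap x' (y - y'))"
    by (simp add: norm_triangle_ineq)
  also have "\<dots> \<le> enorm (x - x') * enorm y + enorm x' * enorm (y - y')"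
    using assms by (intro add_mono ap_cauchy_schwarz dom_diff)
  finally show ?thesis .
qed

lemma hA_cauchy_ap_convergent:
  assumes s: "hA_cauchy T s" and t: "hA_cauchy T t"
  shows "convergent (\<lambda>n. ap (s n) (t n))"
proof -
  obtain Ms where Ms: "Ms > 0" "\<And>n. enorm (s n) \<le> Ms" using hA_cauchy_enorm_bounded[OF s] by blast
  obtain Mt where Mt: "Mt > 0" "\<And>n. enorm (t n) \<le> Mt" using hA_cauchy_enorm_bounded[OF t] by blast
  have d: "\<And>n. s n \<in> DT" "\<And>n. t n \<in> DT" using hA_cauchyD(1) s t by blast+
  have "Cauchy (\<lambda>n. ap (s n) (t n))"
    unfolding Cauchy_def
  proof (intro allI impI)
    fix e :: real assume e: "e > 0"
    obtain N1 N2 where N1: "\<forall>m\<ge>N1. \<forall>n\<ge>N1. enorm (s m - s n) < e / (4 * Mt)"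
      and N2: "\<forall>m\<ge>N2. \<forall>n\<ge>N2. enorm (t m - t n) < e / (4 * Ms)"
      using hA_cauchyD(2)[OF s, of "e / (4 * Mt)"] hA_cauchyD(2)[OF t, of "e / (4 * Ms)"] e Ms Mt
      by auto
    have "dist (ap (s m) (t m)) (ap (s n) (t n)) < e" if mn: "m \<ge> max N1 N2" "n \<ge> max N1 N2" for m n
    proof -
      have "dist (ap (s m) (t m)) (ap (s n) (t n))
          \<le> enorm (s m - s n) * enorm (t m) + enorm (s n) * enorm (t m - t n)"
        using ap_diff_le d by (simp add: dist_norm)
      also have "\<dots> \<le> e / (4 * Mt) * Mt + Ms * (e / (4 * Ms))"
        using N1 N2 mn Ms Mt d e
        using enorm_nonneg[OF dom_diff[OF d(1) d(1)]] enorm_nonneg[OF dom_diff[OF d(2) d(2)]]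
        by (intro add_mono mult_mono) (auto intro: enorm_nonneg less_imp_le)
      also have "\<dots> = e / 2" using Ms Mt by simp
      finally show ?thesis using e by simp
    qed
    then show "\<exists>M. \<forall>m\<ge>M. \<forall>n\<ge>M. dist (ap (s m) (t m)) (ap (s n) (t n)) < e" by blast
  qed
  then show ?thesis using Cauchy_convergent_iff by blast
qed

lemma hA_cauchy_enorm_tendsto_zero:
  assumes s: "hA_cauchy T s" and lim: "s \<longlonglongrightarrow> 0"
  shows "(\<lambda>n. enorm (s n)) \<longlonglongrightarrow> 0"
proof (rule LIMSEQ_I)
  fix e :: real assume e: "e > 0"
  obtain M where M: "M > 0" "\<And>n. enorm (s n) \<le> M" using hA_cauchy_enorm_bounded[OF s] by blast
  define e' where "e' = e\<^sup>2 / (2 * M)"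
  have e': "e' > 0" using e M by (simp add: e'_def)
  obtain N where N: "\<forall>m\<ge>N. \<forall>n\<ge>N. enorm (s m - s n) < e'" using hA_cauchyD(2)[OF s e'] by blast
  have sD: "\<And>n. s n \<in> DT" by (rule hA_cauchyD(1)[OF s])
  have "norm (enorm (s n) - 0) < e" if n: "n \<ge> N" for n
  proof -
    have "Re (ap (s n) (s n)) \<le> M * e' + Re (ap (s n) (s m))" if m: "m \<ge> N" for m
    proof -
      have "Re (ap (s n) (s n)) \<le> cmod (ap (s n) (s n - s m)) + Re (ap (s n) (s m))"
        using ap_diff_right[OF sD, of n "s n" "s m"] complex_Re_le_cmod[of "ap (s n) (s n - s m)"] by simp
      also have "cmod (ap (s n) (s n - s m)) \<le> enorm (s n) * enorm (s n - s m)"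
        by (intro ap_cauchy_schwarz sD dom_diff)
      also have "\<dots> \<le> M * e'"
        using N n m M(2)[of n] enorm_nonneg[OF sD] enorm_nonneg[OF dom_diff[OF sD sD]]
        by (intro mult_mono) (auto intro: less_imp_le M(1))
      finally show ?thesis by simp
    qed
    moreover have "(\<lambda>m. M * e' + Re (ap (s n) (s m))) \<longlonglongrightarrow> M * e' + Re (ap (s n) 0)"
      by (intro tendsto_intros ap_tendsto_right sD lim)
    ultimately have "Re (ap (s n) (s n)) \<le> M * e' + Re (ap (s n) 0)"
      by (intro LIMSEQ_le_const[where X = "\<lambda>m. M * e' + Re (ap (s n) (s m))"]) auto
    then have "(enorm (s n))\<^sup>2 \<le> e\<^sup>2 / 2"
      using enorm_square[OF sD] ap_zero_right[OF sD] M by (simp add: e'_def)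
    also have "\<dots> < e\<^sup>2" using e by simp
    finally have "(enorm (s n))\<^sup>2 < e\<^sup>2" .
    then show ?thesis using enorm_nonneg[OF sD] e by (simp add: power_less_imp_less_base)
  qed
  then show "\<exists>N. \<forall>n\<ge>N. norm (enorm (s n) - 0) < e" by blast
qed

lemma hA_cauchy_ap_diff_tendsto_zero:
  assumes s: "hA_cauchy T s" and s': "hA_cauchy T s'" and t: "hA_cauchy T t" and t': "hA_cauchy T t'"
    and ss': "(\<lambda>n. enorm (s n - s' n)) \<longlonglongrightarrow> 0" and tt': "(\<lambda>n. enorm (t n - t' n)) \<longlonglongrightarrow> 0"
  shows "(\<lambda>n. ap (s n) (t n) - ap (s' n) (t' n)) \<longlonglongrightarrow> 0"
proof -
  obtain Mt where Mt: "\<And>n. enorm (t n) \<le> Mt" using hA_cauchy_enorm_bounded[OF t] by blast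
  obtain Ms where Ms: "\<And>n. enorm (s' n) \<le> Ms" using hA_cauchy_enorm_bounded[OF s'] by blast
  have d: "\<And>n. s n \<in> DT" "\<And>n. s' n \<in> DT" "\<And>n. t n \<in> DT" "\<And>n. t' n \<in> DT"
    using hA_cauchyD(1) s s' t t' by blast+
  have bound: "norm (ap (s n) (t n) - ap (s' n) (t' n)) \<le> enorm (s n - s' n) * Mt + Ms * enorm (t n - t' n)"
    for n
  proof -
    have "norm (ap (s n) (t n) - ap (s' n) (t' n))
        \<le> enorm (s n - s' n) * enorm (t n) + enorm (s' n) * enorm (t n - t' n)"
      using ap_diff_le d by simp
    also have "\<dots> \<le> enorm (s n - s' n) * Mt + Ms * enorm (t n - t' n)"
      using Mt Ms enorm_nonneg[OF dom_diff[OF d(1) d(2)]] enorm_nonneg[OF dom_diff[OF d(3) d(4)]]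
      by (intro add_mono mult_left_mono mult_right_mono) auto
    finally show ?thesis .
  qed
  have "(\<lambda>n. enorm (s n - s' n) * Mt + Ms * enorm (t n - t' n)) \<longlonglongrightarrow> 0"
    using tendsto_add[OF tendsto_mult_left_zero[OF ss'] tendsto_mult_right_zero[OF tt']] by simp
  then show ?thesis by (rule Lim_null_comparison[OF always_eventually[OF allI[OF bound]]])
qed

lemma J_adj_domI_bound:
  assumes bound: "\<And>x. x \<in> DT \<Longrightarrow> cmod (ap x y) \<le> K * enorm x"
  shows "y \<in> J_adj_dom T"
  unfolding J_adj_dom_def
proof (intro CollectI ballI allI impI)
  fix x0 and e :: real assume x0: "x0 \<in> DT" and e: "e > 0"
  define K' where "K' = \<bar>K\<bar> + 1"
  have K': "K' > 0" by (simp add: K'_def add_nonneg_pos)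
  show "\<exists>d>0. \<forall>x\<in>DT. sqrt (Re (ap (x - x0) (x - x0))) < d \<longrightarrow> cmod (ap x y - ap x0 y) < e"
  proof (intro exI[of _ "e / K'"] conjI ballI impI)
    show "e / K' > 0" using e K' by simp
    fix x assume x: "x \<in> DT" and lt: "sqrt (Re (ap (x - x0) (x - x0))) < e / K'"
    have "cmod (ap x y - ap x0 y) = cmod (ap (x - x0) y)" using ap_diff x x0 by simp
    also have "\<dots> \<le> K * enorm (x - x0)" using bound dom_diff x x0 by blast
    also have "\<dots> \<le> K' * enorm (x - x0)"
      using enorm_nonneg[OF dom_diff[OF x x0]] by (intro mult_right_mono) (auto simp: K'_def)
    also have "\<dots> < K' * (e / K')" using lt K' by (intro mult_strict_left_mono) (auto simp: enorm_def)
    also have "\<dots> = e" using K' by simp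
    finally show "cmod (ap x y - ap x0 y) < e" .
  qed
qed

lemma J_adj_dom_bound:
  assumes "y \<in> J_adj_dom T"
  obtains K where "\<And>x. x \<in> DT \<Longrightarrow> cmod (ap x y) \<le> K * enorm x"
proof -
  have "\<forall>x0\<in>DT. \<forall>e>0. \<exists>d>0. \<forall>x\<in>DT. enorm (x - x0) < d \<longrightarrow> cmod (ap x y - ap x0 y) < e"
    using assms by (simp add: J_adj_dom_def enorm_def)
  then obtain d where "d > 0" "\<forall>x\<in>DT. enorm (x - 0) < d \<longrightarrow> cmod (ap x y - ap 0 y) < 1"
    using dom_zero zero_less_one by blast
  then have d: "d > 0" "\<And>x. x \<in> DT \<Longrightarrow> enorm x < d \<Longrightarrow> cmod (ap x y) < 1" by auto
  have "\<exists>K. \<forall>x\<in>DT. cmod (ap x y) \<le> K * enorm x"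
    by (rule homogeneous_bound_of_small_near_zero[where d = d])
      (use d dom_scaleR ap_scaleR enorm_scaleR enorm_nonneg in auto)
  then show ?thesis using that by blast
qed

lemma J_adj_norm2_tendsto:
  assumes "J_adj_rep T y s0"
  obtains s l where "J_adj_rep T y s" "(\<lambda>n. enorm (s n)) \<longlonglongrightarrow> l" "l \<ge> 0" "J_adj_norm2 T y = l\<^sup>2"
proof -
  define s where "s = (SOME s. J_adj_rep T y s)"
  have s: "J_adj_rep T y s" unfolding s_def using assms by (rule someI[of "J_adj_rep T y"])
  then have sC: "hA_cauchy T s" by (simp add: J_adj_rep_def)
  obtain l where l: "(\<lambda>n. enorm (s n)) \<longlonglongrightarrow> l"
    using hA_cauchy_enorm_Cauchy[OF sC] Cauchy_convergent_iff convergent_def by blast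
  have "l \<ge> 0" by (rule LIMSEQ_le_const[OF l]) (use enorm_nonneg hA_cauchyD(1)[OF sC] in blast)
  have "(\<lambda>n. complex_of_real ((enorm (s n))\<^sup>2)) \<longlonglongrightarrow> complex_of_real (l\<^sup>2)"
    by (intro tendsto_intros l)
  then have "(\<lambda>n. ap (s n) (s n)) \<longlonglongrightarrow> complex_of_real (l\<^sup>2)"
    using ap_diag[OF hA_cauchyD(1)[OF sC]] by simp
  then have "J_adj_norm2 T y = l\<^sup>2" unfolding J_adj_norm2_def s_def[symmetric] by (simp add: limI)
  then show ?thesis using that s l \<open>l \<ge> 0\<close> by blast
qed

lemma J_adj_rep_bound:
  assumes "J_adj_rep T y s0" and x: "x \<in> DT"
  shows "cmod (ap x y) \<le> enorm x * sqrt (J_adj_norm2 T y)"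
proof -
  obtain s l where s: "J_adj_rep T y s" and l: "(\<lambda>n. enorm (s n)) \<longlonglongrightarrow> l" "l \<ge> 0" "J_adj_norm2 T y = l\<^sup>2"
    using J_adj_norm2_tendsto[OF assms(1)] by blast
  have "(\<lambda>n. cmod (ap x (s n))) \<longlonglongrightarrow> cmod (ap x y)"
    using s x unfolding J_adj_rep_def by (intro tendsto_norm) blast
  moreover have "(\<lambda>n. enorm x * enorm (s n)) \<longlonglongrightarrow> enorm x * l" by (intro tendsto_mult_left l(1))
  moreover have "cmod (ap x (s n)) \<le> enorm x * enorm (s n)" for n
    using ap_cauchy_schwarz[OF x hA_cauchyD(1)] s unfolding J_adj_rep_def by blast
  ultimately have "cmod (ap x y) \<le> enorm x * l" by (intro LIMSEQ_le) auto
  then show ?thesis using l by simp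
qed

lemma J_adj_rep_enorm_eventually_le:
  assumes s: "J_adj_rep T y s" and bound: "\<And>x. x \<in> DT \<Longrightarrow> cmod (ap x y) \<le> c * enorm x"
    and "c \<ge> 0" and e: "e > 0"
  shows "\<exists>N. \<forall>m\<ge>N. enorm (s m) \<le> c + e"
proof -
  have sC: "hA_cauchy T s" and lim: "\<And>x. x \<in> DT \<Longrightarrow> (\<lambda>n. ap x (s n)) \<longlonglongrightarrow> ap x y"
    using s by (auto simp: J_adj_rep_def)
  have sD: "\<And>n. s n \<in> DT" by (rule hA_cauchyD(1)[OF sC])
  obtain N where N: "\<forall>m\<ge>N. \<forall>n\<ge>N. enorm (s m - s n) < e" using hA_cauchyD(2)[OF sC e] by blast
  have "enorm (s m) \<le> c + e" if m: "m \<ge> N" for m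
  proof -
    have "(enorm (s m))\<^sup>2 \<le> cmod (ap (s m) (s n)) + enorm (s m) * e" if n: "n \<ge> N" for n
    proof -
      have "(enorm (s m))\<^sup>2 = Re (ap (s m) (s n)) + Re (ap (s m) (s m - s n))"
        using enorm_square[OF sD] ap_diff_right[OF sD, of m "s m" "s n"] by simp
      also have "\<dots> \<le> cmod (ap (s m) (s n)) + cmod (ap (s m) (s m - s n))"
        by (intro add_mono complex_Re_le_cmod)
      also have "cmod (ap (s m) (s m - s n)) \<le> enorm (s m) * enorm (s m - s n)"
        by (intro ap_cauchy_schwarz sD dom_diff)
      also have "\<dots> \<le> enorm (s m) * e"
        using N m n enorm_nonneg[OF sD] by (intro mult_left_mono) (auto intro: less_imp_le)
      finally show ?thesis by simp
    qed
    moreover have "(\<lambda>n. cmod (ap (s m) (s n)) + enorm (s m) * e) \<longlonglongrightarrow> cmod (ap (s m) y) + enorm (s m) * e"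
      by (intro tendsto_intros lim sD)
    ultimately have "(enorm (s m))\<^sup>2 \<le> cmod (ap (s m) y) + enorm (s m) * e"
      by (intro LIMSEQ_le_const[where X = "\<lambda>n. cmod (ap (s m) (s n)) + enorm (s m) * e"]) auto
    also have "\<dots> \<le> (c + e) * enorm (s m)" using bound[OF sD] by (simp add: algebra_simps)
    finally have "enorm (s m) * enorm (s m) \<le> (c + e) * enorm (s m)" by (simp add: power2_eq_square)
    then show ?thesis
      using enorm_nonneg[OF sD, of m] \<open>c \<ge> 0\<close> e by (cases "enorm (s m) = 0") auto
  qed
  then show ?thesis by blast
qed

lemma J_adj_norm2_le:
  assumes "J_adj_rep T y s0" and bound: "\<And>x. x \<in> DT \<Longrightarrow> cmod (ap x y) \<le> c * enorm x"
    and "c \<ge> 0"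
  shows "J_adj_norm2 T y \<le> c\<^sup>2"
proof -
  obtain s l where s: "J_adj_rep T y s" and l: "(\<lambda>n. enorm (s n)) \<longlonglongrightarrow> l" "l \<ge> 0" "J_adj_norm2 T y = l\<^sup>2"
    using J_adj_norm2_tendsto[OF assms(1)] by blast
  have "l \<le> c"
  proof (rule field_le_epsilon)
    fix e :: real assume "e > 0"
    then obtain N where "\<forall>m\<ge>N. enorm (s m) \<le> c + e"
      using J_adj_rep_enorm_eventually_le[OF s bound \<open>c \<ge> 0\<close>] by blast
    then show "l \<le> c + e" by (intro LIMSEQ_le_const2[OF l(1)]) blast
  qed
  then show ?thesis using l by (simp add: power_mono)
qed

text \<open>Dirichlet principle: a functional \<phi> bounded by the energy norm is represented by the limit
  of a minimising sequence of (T x, x) - 2 Re \<phi> x.\<close>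

definition riesz_energy :: "('a \<Rightarrow> complex) \<Rightarrow> 'a \<Rightarrow> real" where
  "riesz_energy \<phi> x = Re (ap x x) - 2 * Re (\<phi> x)"

lemma riesz_energy_minimizing_sequence:
  assumes bound: "\<And>x. x \<in> DT \<Longrightarrow> cmod (\<phi> x) \<le> C * enorm x"
  obtains m s where "\<And>x. x \<in> DT \<Longrightarrow> m \<le> riesz_energy \<phi> x"
    and "\<And>n. s n \<in> DT" and "\<And>n. riesz_energy \<phi> (s n) < m + inverse (real (Suc n))"
proof -
  let ?E = "riesz_energy \<phi> ` DT"
  have "- C\<^sup>2 \<le> riesz_energy \<phi> x" if x: "x \<in> DT" for x
  proof -
    have "Re (\<phi> x) \<le> C * enorm x" using bound[OF x] complex_Re_le_cmod order_trans by blast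
    moreover have "0 \<le> (enorm x - C)\<^sup>2" by simp
    ultimately show ?thesis
      using enorm_square[OF x] by (simp add: riesz_energy_def power2_eq_square algebra_simps)
  qed
  then have bdd: "bdd_below ?E" by (intro bdd_belowI[of _ "- C\<^sup>2"]) auto
  have "?E \<noteq> {}" using dom_zero by blast
  then have "\<exists>x\<in>DT. riesz_energy \<phi> x < Inf ?E + inverse (real (Suc n))" for n
    using cInf_less_iff[OF _ bdd, of "Inf ?E + inverse (real (Suc n))"] by auto
  then obtain s where "\<And>n. s n \<in> DT" "\<And>n. riesz_energy \<phi> (s n) < Inf ?E + inverse (real (Suc n))"
    by metis
  moreover have "\<And>x. x \<in> DT \<Longrightarrow> Inf ?E \<le> riesz_energy \<phi> x" using bdd by (simp add: cInf_lower)
  ultimately show ?thesis using that by blast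
qed

lemma riesz_energy_parallelogram:
  assumes add: "\<And>x y. x \<in> DT \<Longrightarrow> y \<in> DT \<Longrightarrow> \<phi> (x + y) = \<phi> x + \<phi> y"
    and scale: "\<And>r x. x \<in> DT \<Longrightarrow> \<phi> (r *\<^sub>R x) = complex_of_real r * \<phi> x"
    and x: "x \<in> DT" and y: "y \<in> DT"
  shows "(enorm (x - y))\<^sup>2
    = 2 * riesz_energy \<phi> x + 2 * riesz_energy \<phi> y - 4 * riesz_energy \<phi> ((1 / 2) *\<^sub>R (x + y))"
proof -
  have xy: "x + y \<in> DT" using dom_add x y by blast
  have "Re (ap ((1 / 2) *\<^sub>R (x + y)) ((1 / 2) *\<^sub>R (x + y))) = (1 / 4) * Re (ap (x + y) (x + y))"
    using ap_scaleR[OF xy] ap_scaleR_right[OF xy] by simp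
  moreover have "Re (\<phi> ((1 / 2) *\<^sub>R (x + y))) = (1 / 2) * (Re (\<phi> x) + Re (\<phi> y))"
    using scale[OF xy] add[OF x y] by simp
  moreover have "Re (ap (x - y) (x - y)) = Re (ap x x) - Re (ap x y) - Re (ap y x) + Re (ap y y)"
    using x y by (simp add: ap_diff ap_diff_right)
  moreover have "Re (ap (x + y) (x + y)) = Re (ap x x) + Re (ap x y) + Re (ap y x) + Re (ap y y)"
    using ap_add_add[OF x y] by simp
  ultimately show ?thesis
    using enorm_square[OF dom_diff[OF x y]] by (simp add: riesz_energy_def algebra_simps)
qed

lemma riesz_energy_add_sm:
  assumes add: "\<And>x y. x \<in> DT \<Longrightarrow> y \<in> DT \<Longrightarrow> \<phi> (x + y) = \<phi> x + \<phi> y"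
    and conj: "\<And>c x. x \<in> DT \<Longrightarrow> \<phi> (sm c x) = c * \<phi> x"
    and u: "u \<in> DT" and x: "x \<in> DT"
  shows "riesz_energy \<phi> (u + sm t x)
    = riesz_energy \<phi> u + 2 * Re (t * (ap x u - \<phi> x)) + (cmod t)\<^sup>2 * Re (ap x x)"
proof -
  have "Re (cnj t * ap u x) = Re (t * ap x u)"
    using ap_hermitian[OF u x] by (metis complex_cnj_cnj complex_cnj_mult cnj.sel(1))
  moreover have "\<phi> (u + sm t x) = \<phi> u + t * \<phi> x" using add[OF u dom_sm[OF x]] conj[OF x] by simp
  ultimately show ?thesis
    using Re_ap_add_sm_diag[OF u x] by (simp add: riesz_energy_def algebra_simps)
qed

lemma riesz_minimizing_hA_cauchy:
  assumes add: "\<And>x y. x \<in> DT \<Longrightarrow> y \<in> DT \<Longrightarrow> \<phi> (x + y) = \<phi> x + \<phi> y"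
    and scale: "\<And>r x. x \<in> DT \<Longrightarrow> \<phi> (r *\<^sub>R x) = complex_of_real r * \<phi> x"
    and m: "\<And>x. x \<in> DT \<Longrightarrow> m \<le> riesz_energy \<phi> x"
    and sD: "\<And>n. s n \<in> DT" and sE: "\<And>n. riesz_energy \<phi> (s n) < m + inverse (real (Suc n))"
  shows "hA_cauchy T s"
  unfolding hA_cauchy_iff
proof (intro conjI allI impI sD)
  fix e :: real assume e: "e > 0"
  obtain N :: nat where N: "4 / e\<^sup>2 < real N" using reals_Archimedean2 by blast
  have "enorm (s i - s j) < e" if ij: "i \<ge> N" "j \<ge> N" for i j
  proof -
    have mid: "(1 / 2) *\<^sub>R (s i + s j) \<in> DT" using dom_scaleR dom_add sD by blast
    have "(enorm (s i - s j))\<^sup>2 \<le> 2 * inverse (real (Suc i)) + 2 * inverse (real (Suc j))"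
      using riesz_energy_parallelogram[OF add scale sD sD, of i j] m[OF mid] sE[of i] sE[of j] by simp
    also have "\<dots> \<le> 4 * inverse (real (Suc N))"
    proof -
      have "inverse (real (Suc i)) \<le> inverse (real (Suc N))" "inverse (real (Suc j)) \<le> inverse (real (Suc N))"
        using ij by (intro le_imp_inverse_le; simp)+
      then show ?thesis by linarith
    qed
    also have "\<dots> < e\<^sup>2"
      using N e by (simp add: field_simps) (smt (verit) zero_less_power)
    finally show ?thesis using e by (simp add: power_less_imp_less_base)
  qed
  then show "\<exists>N. \<forall>i\<ge>N. \<forall>j\<ge>N. enorm (s i - s j) < e" by blast
qed

text \<open>With d = ap x (s n) - \<phi> x and q n = (n + 1) ^ (- 1 / 2), comparing the energy of
  s n + t x, t = - q n cnj d / |d|, with the infimum m bounds |d| by q n (1 + Re (ap x x)) / 2.\<close>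

lemma riesz_minimizing_represents:
  assumes add: "\<And>x y. x \<in> DT \<Longrightarrow> y \<in> DT \<Longrightarrow> \<phi> (x + y) = \<phi> x + \<phi> y"
    and conj: "\<And>c x. x \<in> DT \<Longrightarrow> \<phi> (sm c x) = c * \<phi> x"
    and m: "\<And>x. x \<in> DT \<Longrightarrow> m \<le> riesz_energy \<phi> x"
    and sD: "\<And>n. s n \<in> DT" and sE: "\<And>n. riesz_energy \<phi> (s n) < m + inverse (real (Suc n))"
    and x: "x \<in> DT"
  shows "(\<lambda>n. ap x (s n)) \<longlonglongrightarrow> \<phi> x"
proof -
  define Q where "Q = Re (ap x x)"
  have Q: "Q \<ge> 0" using Re_ap_diag_nonneg[OF x] Q_def by simp
  define q where "q n = sqrt (inverse (real (Suc n)))" for n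
  have q: "q n > 0" "(q n)\<^sup>2 = inverse (real (Suc n))" for n by (simp_all add: q_def)
  have defect: "cmod (ap x (s n) - \<phi> x) \<le> q n * (1 + Q) / 2" for n
  proof (cases "ap x (s n) = \<phi> x")
    case True
    then show ?thesis using q(1)[of n] Q by simp
  next
    case False
    define d where "d = ap x (s n) - \<phi> x"
    have d: "cmod d > 0" using False d_def by simp
    define t where "t = - complex_of_real (q n / cmod d) * cnj d"
    have "t * d = - complex_of_real (q n / cmod d * (cmod d)\<^sup>2)"
      using complex_norm_square[of d] by (simp add: t_def mult.commute)
    then have Re_td: "Re (t * d) = - q n * cmod d" using d by (simp add: power2_eq_square)
    have norm_t: "(cmod t)\<^sup>2 = (q n)\<^sup>2" using d q(1)[of n] by (simp add: t_def norm_mult norm_divide)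
    have "m \<le> riesz_energy \<phi> (s n + sm t x)" using m dom_add[OF sD dom_sm[OF x]] by blast
    also have "\<dots> = riesz_energy \<phi> (s n) - 2 * q n * cmod d + (q n)\<^sup>2 * Q"
      using riesz_energy_add_sm[OF add conj sD x] Re_td norm_t d_def Q_def by simp
    finally have "q n * (2 * cmod d) \<le> q n * (q n * (1 + Q))"
      using sE[of n] q(2)[of n] by (simp add: power2_eq_square algebra_simps)
    then show ?thesis using q(1)[of n] d_def by simp
  qed
  have "q \<longlonglongrightarrow> 0"
    using tendsto_real_sqrt[OF LIMSEQ_inverse_real_of_nat] by (simp add: q_def[abs_def])
  then have "(\<lambda>n. q n * (1 + Q) / 2) \<longlonglongrightarrow> 0" by (intro tendsto_divide_zero tendsto_mult_left_zero)
  then have "(\<lambda>n. ap x (s n) - \<phi> x) \<longlonglongrightarrow> 0"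
    by (rule Lim_null_comparison[OF always_eventually[OF allI[OF defect]]])
  then show ?thesis by (simp add: LIM_zero_iff)
qed

end

section \<open>The Friedrichs extension\<close>

locale friedrichs_setting = positive_operator sm a for sm :: "complex \<Rightarrow> 'a::banach \<Rightarrow> 'a" and a :: "'a op" +
  fixes \<gamma> :: real
  assumes \<gamma>_pos: "\<gamma> > 0" and coercive: "\<And>x. x \<in> odom a \<Longrightarrow> Re (oapp a x x) \<ge> \<gamma> * (norm x)\<^sup>2"
    and dense: "closure (odom a) = UNIV"
begin

abbreviation "H \<equiv> fr_H a"
abbreviation "form \<equiv> fr_form a"

definition form_norm :: "'a \<Rightarrow> real" where "form_norm x = sqrt (Re (form x x))"

lemma fr_approx_iff: "fr_approx a x s \<longleftrightarrow> hA_cauchy a s \<and> s \<longlonglongrightarrow> x"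
  by (simp add: fr_approx_def hA_cauchy_def)

lemma fr_approxD:
  assumes "fr_approx a x s"
  shows "hA_cauchy a s" "s n \<in> DT" "s \<longlonglongrightarrow> x"
  using assms hA_cauchyD(1) by (auto simp: fr_approx_iff)

lemma norm_le_enorm:
  assumes "x \<in> DT"
  shows "sqrt \<gamma> * norm x \<le> enorm x"
proof -
  have "(sqrt \<gamma> * norm x)\<^sup>2 \<le> (enorm x)\<^sup>2"
    using coercive[OF assms] \<gamma>_pos enorm_square[OF assms] by (simp add: power_mult_distrib)
  then show ?thesis using enorm_nonneg[OF assms] by (rule power2_le_imp_le)
qed

lemma hA_cauchy_convergent:
  assumes s: "hA_cauchy a s"
  obtains x where "s \<longlonglongrightarrow> x"
proof -
  have "Cauchy s"
    unfolding Cauchy_def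
  proof (intro allI impI)
    fix e :: real assume e: "e > 0"
    obtain N where N: "\<forall>m\<ge>N. \<forall>n\<ge>N. enorm (s m - s n) < e * sqrt \<gamma>"
      using hA_cauchyD(2)[OF s, of "e * sqrt \<gamma>"] e \<gamma>_pos by auto
    have "dist (s m) (s n) < e" if "m \<ge> N" "n \<ge> N" for m n
    proof -
      have "sqrt \<gamma> * norm (s m - s n) \<le> enorm (s m - s n)"
        by (intro norm_le_enorm dom_diff hA_cauchyD(1)[OF s])
      also have "\<dots> < e * sqrt \<gamma>" using N that by blast
      finally show ?thesis using \<gamma>_pos by (simp add: dist_norm mult.commute)
    qed
    then show "\<exists>M. \<forall>m\<ge>M. \<forall>n\<ge>M. dist (s m) (s n) < e" by blast
  qed
  then show ?thesis using that Cauchy_convergent_iff convergent_def by blast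
qed

lemma fr_approx_add: "fr_approx a x s \<Longrightarrow> fr_approx a y t \<Longrightarrow> fr_approx a (x + y) (\<lambda>n. s n + t n)"
  by (simp add: fr_approx_iff hA_cauchy_add tendsto_add)
lemma fr_approx_sm: "fr_approx a x s \<Longrightarrow> fr_approx a (sm c x) (\<lambda>n. sm c (s n))"
  by (simp add: fr_approx_iff hA_cauchy_sm tendsto_sm)
lemma fr_approx_diff: "fr_approx a x s \<Longrightarrow> fr_approx a y t \<Longrightarrow> fr_approx a (x - y) (\<lambda>n. s n - t n)"
  by (simp add: fr_approx_iff hA_cauchy_diff tendsto_diff)
lemma fr_approx_const: "x \<in> DT \<Longrightarrow> fr_approx a x (\<lambda>n. x)"
  by (simp add: fr_approx_iff hA_cauchy_const)

lemma fr_H_iff: "x \<in> H \<longleftrightarrow> (\<exists>s. fr_approx a x s)" by (simp add: fr_H_def)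
lemma H_add: "x \<in> H \<Longrightarrow> y \<in> H \<Longrightarrow> x + y \<in> H" using fr_approx_add fr_H_iff by blast
lemma H_sm: "x \<in> H \<Longrightarrow> sm c x \<in> H" using fr_approx_sm fr_H_iff by blast
lemma H_diff: "x \<in> H \<Longrightarrow> y \<in> H \<Longrightarrow> x - y \<in> H" using fr_approx_diff fr_H_iff by blast
lemma dom_subset_H: "x \<in> DT \<Longrightarrow> x \<in> H" using fr_approx_const fr_H_iff by blast
lemma H_zero: "0 \<in> H" using dom_subset_H dom_zero by blast
lemma H_scaleR: "y \<in> H \<Longrightarrow> r *\<^sub>R y \<in> H" using H_sm[of y "complex_of_real r"] sm_of_real by simp
lemma closure_H: "closure H = UNIV" using dense closure_mono[of DT H] dom_subset_H by blast

lemma fr_form_tendsto: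
  assumes sx: "fr_approx a x s" and ty: "fr_approx a y t"
  shows "(\<lambda>n. ap (s n) (t n)) \<longlonglongrightarrow> form x y"
proof -
  define s' where "s' = (SOME s. fr_approx a x s)"
  define t' where "t' = (SOME t. fr_approx a y t)"
  have s': "fr_approx a x s'" unfolding s'_def using sx by (rule someI[of "fr_approx a x"])
  have t': "fr_approx a y t'" unfolding t'_def using ty by (rule someI[of "fr_approx a y"])
  have "convergent (\<lambda>n. ap (s' n) (t' n))"
    using hA_cauchy_ap_convergent fr_approxD(1) s' t' by blast
  then have lim: "(\<lambda>n. ap (s' n) (t' n)) \<longlonglongrightarrow> form x y"
    unfolding fr_form_def s'_def t'_def by (simp add: convergent_LIMSEQ_iff)
  have "(\<lambda>n. enorm (s n - s' n)) \<longlonglongrightarrow> 0" "(\<lambda>n. enorm (t n - t' n)) \<longlonglongrightarrow> 0"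
    using fr_approx_diff[OF sx s'] fr_approx_diff[OF ty t']
    by (auto intro!: hA_cauchy_enorm_tendsto_zero simp: fr_approx_iff)
  then have "(\<lambda>n. ap (s n) (t n) - ap (s' n) (t' n)) \<longlonglongrightarrow> 0"
    using fr_approxD(1) sx s' ty t' by (intro hA_cauchy_ap_diff_tendsto_zero) auto
  from tendsto_add[OF this lim] show ?thesis by simp
qed

lemma form_add_left:
  assumes "x \<in> H" "y \<in> H" "z \<in> H"
  shows "form (x + y) z = form x z + form y z"
proof -
  obtain s t u where s: "fr_approx a x s" and t: "fr_approx a y t" and u: "fr_approx a z u"
    using assms fr_H_iff by blast
  have "(\<lambda>n. ap (s n + t n) (u n)) \<longlonglongrightarrow> form (x + y) z" by (rule fr_form_tendsto[OF fr_approx_add[OF s t] u])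
  moreover have "(\<lambda>n. ap (s n + t n) (u n)) \<longlonglongrightarrow> form x z + form y z"
    using tendsto_add[OF fr_form_tendsto[OF s u] fr_form_tendsto[OF t u]] ap_add fr_approxD(2) s t by simp
  ultimately show ?thesis using LIMSEQ_unique by blast
qed

lemma form_sm_left:
  assumes "x \<in> H" "z \<in> H"
  shows "form (sm c x) z = c * form x z"
proof -
  obtain s u where s: "fr_approx a x s" and u: "fr_approx a z u" using assms fr_H_iff by blast
  have "(\<lambda>n. ap (sm c (s n)) (u n)) \<longlonglongrightarrow> form (sm c x) z" by (rule fr_form_tendsto[OF fr_approx_sm[OF s] u])
  moreover have "(\<lambda>n. ap (sm c (s n)) (u n)) \<longlonglongrightarrow> c * form x z"
    using tendsto_mult_left[OF fr_form_tendsto[OF s u]] ap_sm fr_approxD(2)[OF s] by simp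
  ultimately show ?thesis using LIMSEQ_unique by blast
qed

lemma form_hermitian:
  assumes "x \<in> H" "y \<in> H"
  shows "form y x = cnj (form x y)"
proof -
  obtain s t where s: "fr_approx a x s" and t: "fr_approx a y t" using assms fr_H_iff by blast
  have "(\<lambda>n. ap (t n) (s n)) \<longlonglongrightarrow> form y x" by (rule fr_form_tendsto[OF t s])
  moreover have "(\<lambda>n. ap (t n) (s n)) = (\<lambda>n. cnj (ap (s n) (t n)))"
    by (intro ext ap_hermitian fr_approxD(2)[OF s] fr_approxD(2)[OF t])
  then have "(\<lambda>n. ap (t n) (s n)) \<longlonglongrightarrow> cnj (form x y)"
    using tendsto_cnj[OF fr_form_tendsto[OF s t]] by simp
  ultimately show ?thesis using LIMSEQ_unique by blast
qed

lemma form_diff_left: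
  assumes "x \<in> H" "y \<in> H" "z \<in> H"
  shows "form (x - y) z = form x z - form y z"
  using form_add_left[of "x - y" y z] assms H_diff by (simp add: eq_diff_eq)

lemma form_add_right:
  assumes "x \<in> H" "y \<in> H" "z \<in> H"
  shows "form z (x + y) = form z x + form z y"
  using form_hermitian[of "x + y" z] form_hermitian[of x z] form_hermitian[of y z] form_add_left assms H_add
  by simp

lemma form_sm_right:
  assumes "x \<in> H" "z \<in> H"
  shows "form z (sm c x) = cnj c * form z x"
  using form_hermitian[of "sm c x" z] form_hermitian[of x z] form_sm_left assms H_sm by simp

lemma form_diff_right:
  assumes "x \<in> H" "y \<in> H" "z \<in> H"
  shows "form z (x - y) = form z x - form z y"
  using form_hermitian[of "x - y" z] form_hermitian[of x z] form_hermitian[of y z] form_diff_left assms H_diff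
  by simp

lemma form_zero_right: "x \<in> H \<Longrightarrow> form x 0 = 0" using form_sm_right[of 0 x 0] H_zero by simp

lemma form_scaleR_right: "x \<in> H \<Longrightarrow> y \<in> H \<Longrightarrow> form x (r *\<^sub>R y) = complex_of_real r * form x y"
  using form_sm_right[of y x "complex_of_real r"] sm_of_real by simp

lemma form_dom_left:
  assumes x: "x \<in> DT" and y: "y \<in> H"
  shows "form x y = ap x y"
proof -
  obtain t where t: "fr_approx a y t" using y fr_H_iff by blast
  have "(\<lambda>n. ap x (t n)) \<longlonglongrightarrow> form x y" using fr_form_tendsto[OF fr_approx_const[OF x] t] by simp
  moreover have "(\<lambda>n. ap x (t n)) \<longlonglongrightarrow> ap x y" using ap_tendsto_right x fr_approxD(3)[OF t] by blast
  ultimately show ?thesis using LIMSEQ_unique by blast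
qed

lemma form_diag:
  assumes "x \<in> H"
  shows "Im (form x x) = 0" and "Re (form x x) \<ge> \<gamma> * (norm x)\<^sup>2"
proof -
  obtain s where s: "fr_approx a x s" using assms fr_H_iff by blast
  have lim: "(\<lambda>n. ap (s n) (s n)) \<longlonglongrightarrow> form x x" by (rule fr_form_tendsto[OF s s])
  have "(\<lambda>n. Im (ap (s n) (s n))) \<longlonglongrightarrow> Im (form x x)" by (rule tendsto_Im[OF lim])
  then show "Im (form x x) = 0" using Im_ap_diag fr_approxD(2)[OF s] by (simp add: LIMSEQ_const_iff)
  have "(\<lambda>n. \<gamma> * (norm (s n))\<^sup>2) \<longlonglongrightarrow> \<gamma> * (norm x)\<^sup>2" by (intro tendsto_intros fr_approxD(3)[OF s])
  then show "Re (form x x) \<ge> \<gamma> * (norm x)\<^sup>2"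
    using tendsto_Re[OF lim] by (rule LIMSEQ_le) (use coercive fr_approxD(2)[OF s] in blast)
qed

lemma Re_form_diag_nonneg: "x \<in> H \<Longrightarrow> Re (form x x) \<ge> 0"
  using form_diag(2)[of x] \<gamma>_pos by (smt (verit) mult_nonneg_nonneg zero_le_power2)

lemma form_norm_nonneg: "x \<in> H \<Longrightarrow> form_norm x \<ge> 0"
  by (simp add: form_norm_def Re_form_diag_nonneg)

lemma form_norm_square: "x \<in> H \<Longrightarrow> (form_norm x)\<^sup>2 = Re (form x x)"
  by (simp add: form_norm_def Re_form_diag_nonneg)

lemma form_diag_eq: "x \<in> H \<Longrightarrow> form x x = complex_of_real ((form_norm x)\<^sup>2)"
  using form_diag(1) form_norm_square by (simp add: complex_eq_iff)

lemma norm_le_form_norm: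
  assumes "x \<in> H"
  shows "sqrt \<gamma> * norm x \<le> form_norm x"
proof -
  have "(sqrt \<gamma> * norm x)\<^sup>2 \<le> (form_norm x)\<^sup>2"
    using form_diag(2)[OF assms] \<gamma>_pos form_norm_square[OF assms] by (simp add: power_mult_distrib)
  then show ?thesis using form_norm_nonneg[OF assms] by (rule power2_le_imp_le)
qed

lemma fr_approx_enorm_tendsto: "fr_approx a x s \<Longrightarrow> (\<lambda>n. enorm (s n)) \<longlonglongrightarrow> form_norm x"
  unfolding enorm_def form_norm_def by (intro tendsto_intros fr_form_tendsto)

lemma form_cauchy_schwarz:
  assumes "x \<in> H" "y \<in> H"
  shows "cmod (form x y) \<le> form_norm x * form_norm y"
proof -
  obtain s t where s: "fr_approx a x s" and t: "fr_approx a y t" using assms fr_H_iff by blast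
  have "(\<lambda>n. cmod (ap (s n) (t n))) \<longlonglongrightarrow> cmod (form x y)" by (intro tendsto_intros fr_form_tendsto s t)
  moreover have "(\<lambda>n. enorm (s n) * enorm (t n)) \<longlonglongrightarrow> form_norm x * form_norm y"
    by (intro tendsto_intros fr_approx_enorm_tendsto s t)
  moreover have "cmod (ap (s n) (t n)) \<le> enorm (s n) * enorm (t n)" for n
    by (intro ap_cauchy_schwarz fr_approxD(2)[OF s] fr_approxD(2)[OF t])
  ultimately show ?thesis by (intro LIMSEQ_le) auto
qed

abbreviation "AF \<equiv> friedrichs sm a"

lemma AF_dom: "odom AF = {x \<in> H. continuous_on H (form x)}"
  by (simp add: friedrichs_def odom_def)

lemma AF_app: "oapp AF x = (THE z. z \<in> cdual sm \<and> (\<forall>y\<in>H. z y = form x y))"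
  by (simp add: friedrichs_def oapp_def)

lemma form_continuous_iff_bounded:
  assumes x: "x \<in> H"
  shows "continuous_on H (form x) \<longleftrightarrow> (\<exists>K. \<forall>y\<in>H. cmod (form x y) \<le> K * norm y)"
proof
  assume "continuous_on H (form x)"
  then obtain d where d: "d > 0" "\<And>y. y \<in> H \<Longrightarrow> dist y 0 < d \<Longrightarrow> dist (form x y) (form x 0) < 1"
    using H_zero unfolding continuous_on_iff by (meson zero_less_one)
  show "\<exists>K. \<forall>y\<in>H. cmod (form x y) \<le> K * norm y"
    by (rule homogeneous_bound_of_small_near_zero[where d = d])
      (use d form_zero_right[OF x] H_scaleR form_scaleR_right[OF x] in auto)
next
  assume "\<exists>K. \<forall>y\<in>H. cmod (form x y) \<le> K * norm y"
  then show "continuous_on H (form x)"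
    using uniformly_continuous_on_if_bounded[of H "form x"] H_diff form_diff_right[OF _ _ x]
    by (meson uniformly_continuous_imp_continuous)
qed

lemma AF_app_unique:
  assumes "x \<in> H" "v \<in> cdual sm" "\<And>y. y \<in> H \<Longrightarrow> v y = form x y"
  shows "x \<in> odom AF" and "oapp AF x = v"
proof -
  obtain K where K: "\<And>y. cmod (v y) \<le> K * norm y" using cdual_bounded[OF assms(2)] by blast
  have "cmod (form x y) \<le> K * norm y" if "y \<in> H" for y using K[of y] assms(3)[OF that] by simp
  then have "continuous_on H (form x)" using form_continuous_iff_bounded[OF assms(1)] by blast
  then show "x \<in> odom AF" using AF_dom assms(1) by simp
  have unique: "w = v" if "w \<in> cdual sm \<and> (\<forall>y\<in>H. w y = form x y)" for w
    by (rule cdual_eq_on_dense[OF closure_H _ assms(2)]) (use that assms(3) in auto)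
  show "oapp AF x = v" unfolding AF_app
    by (rule the_equality) (use assms(2,3) unique in blast)+
qed

lemma AF_app_cdual:
  assumes x: "x \<in> odom AF"
  shows "oapp AF x \<in> cdual sm" and "\<And>y. y \<in> H \<Longrightarrow> oapp AF x y = form x y"
proof -
  have xH: "x \<in> H" and "continuous_on H (form x)" using x AF_dom by auto
  then obtain K where K: "\<And>y. y \<in> H \<Longrightarrow> cmod (form x y) \<le> K * norm y"
    using form_continuous_iff_bounded by blast
  have "\<exists>z\<in>cdual sm. \<forall>y\<in>H. z y = form x y"
    by (rule cdual_extension_of_dense[OF closure_H H_add H_sm])
      (use form_add_right[OF _ _ xH] form_sm_right[OF _ xH] K in auto)
  then obtain z where z: "z \<in> cdual sm" "\<And>y. y \<in> H \<Longrightarrow> z y = form x y" by blast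
  then have "oapp AF x = z" using AF_app_unique(2)[OF xH] by blast
  then show "oapp AF x \<in> cdual sm" "\<And>y. y \<in> H \<Longrightarrow> oapp AF x y = form x y" using z by auto
qed

lemma AF_dom_subset_H: "x \<in> odom AF \<Longrightarrow> x \<in> H" using AF_dom by auto

lemma dom_subset_AF_dom:
  assumes "x \<in> DT"
  shows "x \<in> odom AF" and "oapp AF x = ap x"
  using AF_app_unique[OF dom_subset_H[OF assms] ap_cdual[OF assms]] form_dom_left[OF assms] by auto

lemma AF_is_op: "is_op sm AF"
proof -
  have "x + y \<in> odom AF \<and> oapp AF (x + y) = (\<lambda>z. oapp AF x z + oapp AF y z)"
    if x: "x \<in> odom AF" and y: "y \<in> odom AF" for x y
  proof -
    have xy: "x \<in> H" "y \<in> H" using x y AF_dom_subset_H by auto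
    have "oapp AF x z + oapp AF y z = form (x + y) z" if "z \<in> H" for z
      using AF_app_cdual(2)[OF x that] AF_app_cdual(2)[OF y that] form_add_left[OF xy that] by simp
    then show ?thesis
      using AF_app_unique[OF H_add[OF xy] cdual_add[OF AF_app_cdual(1)[OF x] AF_app_cdual(1)[OF y]]]
      by blast
  qed
  moreover have "sm c x \<in> odom AF \<and> oapp AF (sm c x) = (\<lambda>z. c * oapp AF x z)"
    if x: "x \<in> odom AF" for c x
  proof -
    have xH: "x \<in> H" using x AF_dom_subset_H by auto
    have "c * oapp AF x z = form (sm c x) z" if "z \<in> H" for z
      using AF_app_cdual(2)[OF x that] form_sm_left[OF xH that] by simp
    then show ?thesis using AF_app_unique[OF H_sm[OF xH] cdual_cmult[OF AF_app_cdual(1)[OF x]]] by blast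
  qed
  ultimately show ?thesis
    unfolding is_op_def using dom_subset_AF_dom(1)[OF dom_zero] AF_app_cdual(1) by blast
qed

lemma AF_positive: "positive_op AF"
  unfolding positive_op_def
  using AF_app_cdual(2) AF_dom_subset_H form_diag(1) Re_form_diag_nonneg by simp

lemma AF_extends: "extends AF a"
  unfolding extends_def using dom_subset_AF_dom by blast

lemma energy_riesz_representation:
  assumes add: "\<And>x y. x \<in> DT \<Longrightarrow> y \<in> DT \<Longrightarrow> \<phi> (x + y) = \<phi> x + \<phi> y"
    and conj: "\<And>c x. x \<in> DT \<Longrightarrow> \<phi> (sm c x) = c * \<phi> x"
    and bound: "\<And>x. x \<in> DT \<Longrightarrow> cmod (\<phi> x) \<le> C * enorm x"
  obtains h where "h \<in> H" and "\<And>x. x \<in> DT \<Longrightarrow> ap x h = \<phi> x"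
proof -
  have scale: "\<phi> (r *\<^sub>R x) = complex_of_real r * \<phi> x" if "x \<in> DT" for r x
    using conj[OF that, of "complex_of_real r"] sm_of_real by simp
  obtain m s where m: "\<And>x. x \<in> DT \<Longrightarrow> m \<le> riesz_energy \<phi> x" and sD: "\<And>n. s n \<in> DT"
    and sE: "\<And>n. riesz_energy \<phi> (s n) < m + inverse (real (Suc n))"
    using riesz_energy_minimizing_sequence[OF bound] by blast
  have s: "hA_cauchy a s" by (rule riesz_minimizing_hA_cauchy[OF add scale m sD sE])
  then obtain h where h: "s \<longlonglongrightarrow> h" by (rule hA_cauchy_convergent)
  have "ap x h = \<phi> x" if x: "x \<in> DT" for x
    using riesz_minimizing_represents[OF add conj m sD sE x] ap_tendsto_right[OF x h] LIMSEQ_unique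
    by blast
  moreover have "h \<in> H" using s h fr_approx_iff fr_H_iff by blast
  ultimately show ?thesis using that by blast
qed

lemma fr_approx_form_norm_tendsto_zero:
  assumes s: "fr_approx a x s"
  shows "(\<lambda>m. form_norm (x - s m)) \<longlonglongrightarrow> 0"
proof (rule LIMSEQ_I)
  fix e :: real assume e: "e > 0"
  obtain N where N: "\<forall>n\<ge>N. \<forall>m\<ge>N. enorm (s n - s m) < e / 2"
    using hA_cauchyD(2)[OF fr_approxD(1)[OF s], of "e / 2"] e by auto
  have "norm (form_norm (x - s m) - 0) < e" if m: "m \<ge> N" for m
  proof -
    have approx: "fr_approx a (x - s m) (\<lambda>n. s n - s m)"
      by (rule fr_approx_diff[OF s fr_approx_const[OF fr_approxD(2)[OF s]]])
    have "form_norm (x - s m) \<le> e / 2"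
      by (rule LIMSEQ_le_const2[OF fr_approx_enorm_tendsto[OF approx]]) (use N m in \<open>auto intro: less_imp_le\<close>)
    moreover have "x - s m \<in> H" using approx fr_H_iff by blast
    ultimately show ?thesis using form_norm_nonneg e by simp
  qed
  then show "\<exists>N. \<forall>m\<ge>N. norm (form_norm (x - s m) - 0) < e" by blast
qed

lemma fr_approx_form_tendsto_left:
  assumes s: "fr_approx a x s" and y: "y \<in> H"
  shows "(\<lambda>m. form (s m) y) \<longlonglongrightarrow> form x y"
proof -
  have sH: "\<And>m. s m \<in> H" and xH: "x \<in> H" using s dom_subset_H fr_approxD(2) fr_H_iff by blast+
  have bound: "norm (form (s m) y - form x y) \<le> form_norm (x - s m) * form_norm y" for m
    using form_cauchy_schwarz[OF H_diff[OF xH sH] y] form_diff_left[OF xH sH y] by (simp add: norm_minus_commute)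
  have "(\<lambda>m. form_norm (x - s m) * form_norm y) \<longlonglongrightarrow> 0"
    by (rule tendsto_mult_left_zero[OF fr_approx_form_norm_tendsto_zero[OF s]])
  then have "(\<lambda>m. form (s m) y - form x y) \<longlonglongrightarrow> 0"
    by (rule Lim_null_comparison[OF always_eventually[OF allI[OF bound]]])
  then show ?thesis by (simp add: LIM_zero_iff)
qed

lemma AF_surj:
  assumes f: "f \<in> cdual sm"
  obtains h where "h \<in> odom AF" and "oapp AF h = f"
proof -
  obtain K where K: "\<And>x. cmod (f x) \<le> K * norm x" using cdual_bounded[OF f] by blast
  have add: "cnj (f (x + y)) = cnj (f x) + cnj (f y)" for x y using cdualD(1)[OF f] by simp
  have conj: "cnj (f (sm c x)) = c * cnj (f x)" for c x using cdualD(2)[OF f] by simp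
  have bound: "cmod (cnj (f x)) \<le> (\<bar>K\<bar> / sqrt \<gamma>) * enorm x" if x: "x \<in> DT" for x
  proof -
    have "cmod (f x) \<le> \<bar>K\<bar> * norm x" using K[of x] by (smt (verit) mult_right_mono norm_ge_zero)
    also have "\<dots> \<le> \<bar>K\<bar> * (enorm x / sqrt \<gamma>)"
      using norm_le_enorm[OF x] \<gamma>_pos by (intro mult_left_mono) (auto simp: field_simps)
    finally show ?thesis by simp
  qed
  obtain h where hH: "h \<in> H" and hD: "\<And>x. x \<in> DT \<Longrightarrow> ap x h = cnj (f x)"
    using energy_riesz_representation[OF add conj bound] by blast
  have "form h y = f y" if y: "y \<in> H" for y
  proof -
    obtain t where t: "fr_approx a y t" using y fr_H_iff by blast
    have "(\<lambda>n. form (t n) h) \<longlonglongrightarrow> form y h" by (rule fr_approx_form_tendsto_left[OF t hH])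
    moreover have "form (t n) h = cnj (f (t n))" for n using form_dom_left[OF fr_approxD(2)[OF t] hH] hD fr_approxD(2)[OF t] by simp
    moreover have "(\<lambda>n. cnj (f (t n))) \<longlonglongrightarrow> cnj (f y)" by (intro tendsto_cnj cdual_tendsto[OF f fr_approxD(3)[OF t]])
    ultimately have "form y h = cnj (f y)" using LIMSEQ_unique by fastforce
    then show ?thesis using form_hermitian[OF y hH] by simp
  qed
  then show ?thesis using AF_app_unique[OF hH f] that by metis
qed

end

sublocale friedrichs_setting \<subseteq> F: positive_operator sm "friedrichs sm a"
  by unfold_locales (rule AF_is_op, rule AF_positive)

context friedrichs_setting begin

lemma F_enorm: "x \<in> odom AF \<Longrightarrow> F.enorm x = form_norm x"
  by (simp add: F.enorm_def form_norm_def AF_app_cdual(2) AF_dom_subset_H)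

lemma F_enorm_dom: "x \<in> DT \<Longrightarrow> F.enorm x = enorm x"
  by (simp add: F.enorm_def enorm_def dom_subset_AF_dom)

text \<open>In the notation of the paper: J_{A_F}* y is the class of A_F h in H_{A_F}.\<close>

lemma J_adj_dom_AF_representative:
  assumes y: "y \<in> J_adj_dom AF"
  obtains h where "h \<in> H" and "\<And>x. x \<in> odom AF \<Longrightarrow> oapp AF x y = oapp AF x h"
proof -
  obtain K where K: "\<And>x. x \<in> odom AF \<Longrightarrow> cmod (oapp AF x y) \<le> K * F.enorm x"
    using F.J_adj_dom_bound[OF y] by blast
  have "cmod (ap x y) \<le> K * enorm x" if "x \<in> DT" for x
    using K[OF dom_subset_AF_dom(1)[OF that]] dom_subset_AF_dom(2)[OF that] F_enorm_dom[OF that] by simp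
  then obtain h where hH: "h \<in> H" and hD: "\<And>x. x \<in> DT \<Longrightarrow> ap x h = ap x y"
    using energy_riesz_representation[of "\<lambda>x. ap x y"] ap_add ap_sm by blast
  have "oapp AF x y = oapp AF x h" if x: "x \<in> odom AF" for x
  proof -
    obtain t where t: "fr_approx a x t" using AF_dom_subset_H[OF x] fr_H_iff by blast
    have tD: "\<And>n. t n \<in> DT" using fr_approxD(2)[OF t] .
    have tF: "\<And>n. t n \<in> odom AF" using dom_subset_AF_dom(1)[OF tD] .
    have "(\<lambda>n. form (t n) h) \<longlonglongrightarrow> oapp AF x h"
      using fr_approx_form_tendsto_left[OF t hH] AF_app_cdual(2)[OF x hH] by simp
    moreover have "form (t n) h = oapp AF (t n) y" for n
      using form_dom_left[OF tD hH] hD[OF tD] dom_subset_AF_dom(2)[OF tD] by simp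
    moreover have "(\<lambda>n. oapp AF (t n) y) \<longlonglongrightarrow> oapp AF x y"
    proof -
      have bound: "norm (oapp AF (t n) y - oapp AF x y) \<le> \<bar>K\<bar> * form_norm (x - t n)" for n
      proof -
        have "oapp AF (t n) y - oapp AF x y = - oapp AF (x - t n) y" using F.ap_diff[OF x tF] by simp
        then have "norm (oapp AF (t n) y - oapp AF x y) \<le> K * F.enorm (x - t n)"
          using K[OF F.dom_diff[OF x tF]] by simp
        also have "\<dots> \<le> \<bar>K\<bar> * form_norm (x - t n)"
          using F_enorm[OF F.dom_diff[OF x tF]] F.enorm_nonneg[OF F.dom_diff[OF x tF]]
          by (simp add: mult_right_mono)
        finally show ?thesis .
      qed
      have "(\<lambda>n. \<bar>K\<bar> * form_norm (x - t n)) \<longlonglongrightarrow> 0"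
        by (rule tendsto_mult_right_zero[OF fr_approx_form_norm_tendsto_zero[OF t]])
      then have "(\<lambda>n. oapp AF (t n) y - oapp AF x y) \<longlonglongrightarrow> 0"
        by (rule Lim_null_comparison[OF always_eventually[OF allI[OF bound]]])
      then show ?thesis by (simp add: LIM_zero_iff)
    qed
    ultimately show ?thesis using LIMSEQ_unique by fastforce
  qed
  then show ?thesis using that hH by blast
qed

lemma AF_pairing_bounded_of_continuous:
  assumes "continuous_on (odom AF) (\<lambda>x. oapp AF x y)"
  obtains K where "\<And>x. x \<in> odom AF \<Longrightarrow> cmod (oapp AF x y) \<le> K * norm x"
proof -
  obtain d where d: "d > 0" "\<And>x. x \<in> odom AF \<Longrightarrow> dist x 0 < d \<Longrightarrow> dist (oapp AF x y) (oapp AF 0 y) < 1"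
    using assms F.dom_zero unfolding continuous_on_iff by (meson zero_less_one)
  have "\<exists>K. \<forall>x\<in>odom AF. cmod (oapp AF x y) \<le> K * norm x"
    by (rule homogeneous_bound_of_small_near_zero[where d = d])
      (use d F.dom_scaleR F.ap_scaleR in auto)
  then show ?thesis using that by blast
qed

lemma AF_pairing_bounded_imp_dom:
  assumes K: "\<And>x. x \<in> odom AF \<Longrightarrow> cmod (oapp AF x y) \<le> K * norm x"
  shows "y \<in> odom AF"
proof -
  have "cmod (oapp AF x y) \<le> (\<bar>K\<bar> / sqrt \<gamma>) * F.enorm x" if x: "x \<in> odom AF" for x
  proof -
    have "cmod (oapp AF x y) \<le> \<bar>K\<bar> * norm x" using K[OF x] by (smt (verit) mult_right_mono norm_ge_zero)
    also have "\<dots> \<le> \<bar>K\<bar> * (form_norm x / sqrt \<gamma>)"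
      using norm_le_form_norm[OF AF_dom_subset_H[OF x]] \<gamma>_pos by (intro mult_left_mono) (auto simp: field_simps)
    finally show ?thesis using F_enorm[OF x] by simp
  qed
  then have "y \<in> J_adj_dom AF" by (rule F.J_adj_domI_bound)
  then obtain h where hH: "h \<in> H" and hF: "\<And>x. x \<in> odom AF \<Longrightarrow> oapp AF x y = oapp AF x h"
    using J_adj_dom_AF_representative by blast
  have "y = h"
  proof (rule cdual_separates_points)
    fix f assume "f \<in> cdual sm"
    then obtain w where "w \<in> odom AF" "oapp AF w = f" using AF_surj by blast
    then show "f y = f h" using hF by blast
  qed
  then have yH: "y \<in> H" using hH by simp
  have "cmod (form y u) \<le> K * norm u" if u: "u \<in> H" for u
  proof -
    obtain t where t: "fr_approx a u t" using u fr_H_iff by blast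
    have "(\<lambda>n. cmod (form (t n) y)) \<longlonglongrightarrow> cmod (form u y)"
      by (intro tendsto_norm fr_approx_form_tendsto_left[OF t yH])
    moreover have "(\<lambda>n. K * norm (t n)) \<longlonglongrightarrow> K * norm u" by (intro tendsto_intros fr_approxD(3)[OF t])
    moreover have "cmod (form (t n) y) \<le> K * norm (t n)" for n
      using K[OF dom_subset_AF_dom(1)] form_dom_left[OF _ yH] dom_subset_AF_dom(2) fr_approxD(2)[OF t]
      by simp
    ultimately have "cmod (form u y) \<le> K * norm u" by (intro LIMSEQ_le) auto
    then show ?thesis using form_hermitian[OF yH u] by simp
  qed
  then show ?thesis using AF_dom form_continuous_iff_bounded[OF yH] yH by blast
qed

lemma AF_adj_dom: "odom (adj sm AF) = odom AF"
proof -
  have "continuous_on (odom AF) (\<lambda>x. oapp AF x y)" if y: "y \<in> odom AF" for y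
  proof -
    have "continuous_on (odom AF) (\<lambda>x. cnj (oapp AF y x))"
      by (intro continuous_intros continuous_on_subset[OF cdualD(3)[OF AF_app_cdual(1)[OF y]]]) auto
    moreover have "\<And>x. x \<in> odom AF \<Longrightarrow> cnj (oapp AF y x) = oapp AF x y"
      using F.ap_hermitian[OF y] by simp
    ultimately show ?thesis using continuous_on_cong by force
  qed
  moreover have "y \<in> odom AF" if "continuous_on (odom AF) (\<lambda>x. oapp AF x y)" for y
    using AF_pairing_bounded_of_continuous[OF that] AF_pairing_bounded_imp_dom by metis
  ultimately show ?thesis unfolding adj_def odom_def[of "(_, _)"] by auto
qed

lemma AF_adj_app:
  assumes x: "x \<in> odom AF"
  shows "oapp (adj sm AF) x = oapp AF x"
proof -
  have closure_dom: "closure (odom AF) = UNIV"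
    using dense closure_mono[of DT "odom AF"] dom_subset_AF_dom(1) by blast
  have unique: "z = oapp AF x" if "z \<in> cdual sm \<and> (\<forall>x'\<in>odom AF. cnj (z x') = oapp AF x' x)" for z
  proof (rule cdual_eq_on_dense[OF closure_dom])
    show "z \<in> cdual sm" "oapp AF x \<in> cdual sm" using that AF_app_cdual(1)[OF x] by auto
    show "z x' = oapp AF x x'" if "x' \<in> odom AF" for x'
      using \<open>z \<in> cdual sm \<and> _\<close> F.ap_hermitian[OF x that] that by (metis complex_cnj_cnj)
  qed
  have "oapp AF x \<in> cdual sm \<and> (\<forall>x'\<in>odom AF. cnj (oapp AF x x') = oapp AF x' x)"
    using AF_app_cdual(1)[OF x] F.ap_hermitian[OF x] by simp
  then have "(THE z. z \<in> cdual sm \<and> (\<forall>x'\<in>odom AF. cnj (z x') = oapp AF x' x)) = oapp AF x"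
    using unique by (intro the_equality) blast+
  moreover have "oapp (adj sm AF) x = (THE z. z \<in> cdual sm \<and> (\<forall>x'\<in>odom AF. cnj (z x') = oapp AF x' x))"
    by (simp add: adj_def oapp_def)
  ultimately show ?thesis by simp
qed

lemma AF_self_adjoint: "self_adjoint sm AF"
  unfolding self_adjoint_def op_eq_def using AF_adj_dom AF_adj_app by simp

lemma hA_cauchy_extension_iff:
  assumes ext: "extends B a" and s: "\<And>n. s n \<in> DT"
  shows "hA_cauchy B s \<longleftrightarrow> hA_cauchy a s"
proof -
  have "s n \<in> odom B" "oapp B (s m - s n) = ap (s m - s n)" for m n
    using ext s dom_diff by (auto simp: extends_def)
  then show ?thesis by (simp add: hA_cauchy_def s)
qed

lemma J_adj_rep_of_representative:
  assumes B: "positive_operator sm B" and ext: "extends B a"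
    and yh: "\<And>x. x \<in> odom B \<Longrightarrow> oapp B x y = oapp B x h" and t: "fr_approx a h t"
  shows "J_adj_rep B y t"
proof -
  interpret B: positive_operator sm B by (rule B)
  have "hA_cauchy B t" using hA_cauchy_extension_iff[OF ext, of t] fr_approxD(1,2)[OF t] by blast
  moreover have "(\<lambda>n. oapp B x (t n)) \<longlonglongrightarrow> oapp B x y" if x: "x \<in> odom B" for x
    using B.ap_tendsto_right[OF x fr_approxD(3)[OF t]] yh[OF x] by simp
  ultimately show ?thesis by (simp add: J_adj_rep_def)
qed

lemma J_adj_norm2_AF:
  assumes h: "h \<in> H" and hF: "\<And>x. x \<in> odom AF \<Longrightarrow> oapp AF x y = oapp AF x h"
  shows "J_adj_norm2 AF y = (form_norm h)\<^sup>2"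
proof -
  obtain t where t: "fr_approx a h t" using h fr_H_iff by blast
  have tD: "\<And>n. t n \<in> DT" by (rule fr_approxD(2)[OF t])
  have rep: "J_adj_rep AF y t"
    by (rule J_adj_rep_of_representative[OF F.positive_operator_axioms AF_extends hF t])
  have pairing: "oapp AF x y = form x h" if x: "x \<in> odom AF" for x
    using hF[OF x] AF_app_cdual(2)[OF x h] by simp
  have "cmod (oapp AF x y) \<le> form_norm h * F.enorm x" if x: "x \<in> odom AF" for x
    using form_cauchy_schwarz[OF AF_dom_subset_H[OF x] h] pairing[OF x] F_enorm[OF x] by (simp add: mult.commute)
  then have upper: "J_adj_norm2 AF y \<le> (form_norm h)\<^sup>2"
    by (rule F.J_adj_norm2_le[OF rep _ form_norm_nonneg[OF h]])
  have N0: "J_adj_norm2 AF y \<ge> 0" using F.J_adj_norm2_tendsto[OF rep] by (metis zero_le_power2)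
  have "form_norm h \<le> sqrt (J_adj_norm2 AF y)"
  proof -
    have "(\<lambda>n. cmod (form (t n) h)) \<longlonglongrightarrow> cmod (form h h)"
      by (intro tendsto_norm fr_approx_form_tendsto_left[OF t h])
    moreover have "(\<lambda>n. enorm (t n) * sqrt (J_adj_norm2 AF y)) \<longlonglongrightarrow> form_norm h * sqrt (J_adj_norm2 AF y)"
      by (intro tendsto_mult_right fr_approx_enorm_tendsto[OF t])
    moreover have "cmod (form (t n) h) \<le> enorm (t n) * sqrt (J_adj_norm2 AF y)" for n
      using F.J_adj_rep_bound[OF rep dom_subset_AF_dom(1)[OF tD]] pairing[OF dom_subset_AF_dom(1)[OF tD]]
        F_enorm_dom[OF tD] by simp
    ultimately have "cmod (form h h) \<le> form_norm h * sqrt (J_adj_norm2 AF y)" by (intro LIMSEQ_le) auto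
    moreover have "cmod (form h h) = form_norm h * form_norm h"
      using form_diag_eq[OF h] by (metis abs_power2 norm_of_real power2_eq_square)
    ultimately have "form_norm h * form_norm h \<le> form_norm h * sqrt (J_adj_norm2 AF y)" by simp
    then show ?thesis using form_norm_nonneg[OF h] N0 by (cases "form_norm h = 0") auto
  qed
  then have "(form_norm h)\<^sup>2 \<le> J_adj_norm2 AF y"
    using form_norm_nonneg[OF h] N0 by (metis power_mono real_sqrt_pow2)
  with upper show ?thesis by simp
qed

end

section \<open>Maximality\<close>

locale friedrichs_extension = friedrichs_setting sm a \<gamma> + A: positive_operator sm A
  for sm :: "complex \<Rightarrow> 'a::banach \<Rightarrow> 'a" and a :: "'a op" and \<gamma> :: real and A :: "'a op" +
  assumes extends_a: "extends A a"
begin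

lemma A_pairing_le_form_norm:
  assumes h: "h \<in> H" and x: "x \<in> A.DT"
  shows "cmod (A.ap x h) \<le> form_norm h * A.enorm x"
proof -
  obtain t where t: "fr_approx a h t" using h fr_H_iff by blast
  have tA: "\<And>n. t n \<in> A.DT" and A_eq: "\<And>n. A.ap (t n) = ap (t n)"
    using extends_a fr_approxD(2)[OF t] by (auto simp: extends_def)
  have "(\<lambda>n. cmod (A.ap x (t n))) \<longlonglongrightarrow> cmod (A.ap x h)"
    by (intro tendsto_norm A.ap_tendsto_right[OF x fr_approxD(3)[OF t]])
  moreover have "(\<lambda>n. enorm (t n) * A.enorm x) \<longlonglongrightarrow> form_norm h * A.enorm x"
    by (intro tendsto_mult_right fr_approx_enorm_tendsto[OF t])
  moreover have "cmod (A.ap x (t n)) \<le> enorm (t n) * A.enorm x" for n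
    using A.ap_cauchy_schwarz[OF tA x] A.ap_hermitian[OF tA x] A_eq
    by (simp add: A.enorm_def enorm_def)
  ultimately show ?thesis by (intro LIMSEQ_le) auto
qed

lemma J_adj_AF_dominates:
  assumes y: "y \<in> J_adj_dom AF"
  shows "y \<in> J_adj_dom A" and "J_adj_norm2 A y \<le> J_adj_norm2 AF y"
proof -
  obtain h where h: "h \<in> H" and hF: "\<And>x. x \<in> odom AF \<Longrightarrow> oapp AF x y = oapp AF x h"
    using J_adj_dom_AF_representative[OF y] by blast
  have hA: "A.ap x y = A.ap x h" if x: "x \<in> A.DT" for x
  proof -
    obtain w where w: "w \<in> odom AF" "oapp AF w = A.ap x" using AF_surj[OF A.ap_cdual[OF x]] by blast
    show ?thesis using hF[OF w(1)] unfolding w(2) .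
  qed
  then have bound: "cmod (A.ap x y) \<le> form_norm h * A.enorm x" if "x \<in> A.DT" for x
    using A_pairing_le_form_norm[OF h that] that by simp
  then show "y \<in> J_adj_dom A" by (rule A.J_adj_domI_bound)
  obtain t where t: "fr_approx a h t" using h fr_H_iff by blast
  have "J_adj_rep A y t"
    by (rule J_adj_rep_of_representative[OF A.positive_operator_axioms extends_a hA t])
  then have "J_adj_norm2 A y \<le> (form_norm h)\<^sup>2"
    by (rule A.J_adj_norm2_le[OF _ bound form_norm_nonneg[OF h]])
  then show "J_adj_norm2 A y \<le> J_adj_norm2 AF y" using J_adj_norm2_AF[OF h hF] by simp
qed

lemma AF_ge: "op_ge AF A"
  unfolding op_ge_def using J_adj_AF_dominates by blast

end

theorem theorem3:
  fixes sm :: "complex \<Rightarrow> 'a::{real_normed_vector, banach} \<Rightarrow> 'a"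
    and a :: "'a op" and \<gamma> :: real
  assumes "cplx_space sm" and "reflexive_space sm"
    and "is_op sm a" and "closure (odom a) = UNIV" and "positive_op a"
    and "\<gamma> > 0"
    and "\<forall>x\<in>odom a. Im (oapp a x x) = 0 \<and> Re (oapp a x x) \<ge> \<gamma> * (norm x)\<^sup>2"
  shows "is_op sm (friedrichs sm a) \<and> positive_op (friedrichs sm a) \<and>
         self_adjoint sm (friedrichs sm a) \<and> extends (friedrichs sm a) a \<and>
         (\<forall>A. is_op sm A \<and> positive_op A \<and> self_adjoint sm A \<and> extends A a
              \<longrightarrow> op_ge (friedrichs sm a) A)"
proof -
  interpret friedrichs_setting sm a \<gamma>
    by unfold_locales (use assms in auto)
  have "op_ge (friedrichs sm a) A" if "is_op sm A" "positive_op A" "extends A a" for A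
  proof -
    interpret friedrichs_extension sm a \<gamma> A
      by unfold_locales (use that in auto)
    show ?thesis by (rule AF_ge)
  qed
  then show ?thesis using AF_is_op AF_positive AF_self_adjoint AF_extends by blast
qed

end
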